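(* Let $\mathcal{X}=\mathcal{Y}=\{0,1\}$ and let $d:\mathcal{X}\times\mathcal{Y}\to\mathbb{R}_{\mathrm{c}}$ be the single-letter distortion measure given by the matrix $d=\begin{bmatrix}0 & d_{0,1}\\ d_{1,0} & 0\end{bmatrix}$ with $d_{0,1}>0$ and $d_{1,0}>0$ computable. Then there exist a sequence of computable input distributions $(P_{X,n})_{n\in\mathbb{N}}$ in $\mathcal{P}_{\mathrm{c}}(\mathcal{X})$ and a computable sequence of distortion levels $(D_n)_{n\in\mathbb{N}}$ such that no function $F_{\mathrm{opt}}$ computing the sequence of optimal transition probabilities $P^{*}_{Y|X,n}\in\mathcal{P}_{\mathrm{opt}}(d,D_n,P_{X,n})$ is Banach–Mazur computable.
   Context: A real number is computable if it is the effective limit of a computable sequence of rationals (with a recursive modulus of convergence); $\mathbb{R}_{\mathrm{c}}$ denotes the computable reals, a sequence of reals (or vectors/matrices) is computable if this can be done uniformly in the index, and $\mathcal{P}_{\mathrm{c}}(\mathcal{X})$ denotes the probability distributions on $\mathcal{X}$ with computable entries. For a source distribution $P_X$, distortion measure $d$ and level $D$, the rate distortion function is $R(D)=\inf\{I(X;Y): P_{Y|X},\ \sum_{x,y}P_X(x)P_{Y|X}(y|x)d(x,y)\leq D\}$ over all test channels $P_{Y|X}$, and $\mathcal{P}_{\mathrm{opt}}(d,D,P_X)$ is the set of test channels attaining the minimum. A function $F_{\mathrm{opt}}$ mapping inputs (source distribution, distortion level) to an optimal test channel is Banach–Mazur computable if it maps every computable sequence of inputs to a computable sequence of outputs. *)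

theory Defs
  imports Complex_Main
begin

datatype recf = Zero | Succ | Proj nat | Comp recf "recf list" | PrimRec recf recf | Mu recf

inductive eval :: "recf \<Rightarrow> nat list \<Rightarrow> nat \<Rightarrow> bool" where
  eval_Zero: "eval Zero xs 0"
| eval_Succ: "eval Succ (x # xs) (Suc x)"
| eval_Proj: "i < length xs \<Longrightarrow> eval (Proj i) xs (xs ! i)"
| eval_Comp: "list_all2 (\<lambda>g v. eval g xs v) gs ys \<Longrightarrow> eval f ys v \<Longrightarrow> eval (Comp f gs) xs v"
| eval_PR0: "eval f xs v \<Longrightarrow> eval (PrimRec f g) (0 # xs) v"
| eval_PRS: "eval (PrimRec f g) (y # xs) r \<Longrightarrow> eval g (y # r # xs) v
     \<Longrightarrow> eval (PrimRec f g) (Suc y # xs) v"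
| eval_Mu: "eval f (y # xs) 0 \<Longrightarrow> (\<And>z. z < y \<Longrightarrow> \<exists>w>0. eval f (z # xs) w)
     \<Longrightarrow> eval (Mu f) xs y"
monos list.rel_mono

definition computable1 :: "(nat \<Rightarrow> nat) \<Rightarrow> bool" where
  "computable1 f \<longleftrightarrow> (\<exists>t. \<forall>n. eval t [n] (f n))"

definition computable2 :: "(nat \<Rightarrow> nat \<Rightarrow> nat) \<Rightarrow> bool" where
  "computable2 f \<longleftrightarrow> (\<exists>t. \<forall>m n. eval t [m, n] (f m n))"

definition rat_code :: "nat \<Rightarrow> nat \<Rightarrow> nat \<Rightarrow> real" where
  "rat_code a b c = (real a - real b) / (real c + 1)"

definition computable_real :: "real \<Rightarrow> bool" where
  "computable_real x \<longleftrightarrow> (\<exists>a b c e. computable1 a \<and> computable1 b \<and> computable1 c \<and> computable1 e \<and>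
     (\<forall>N k. k \<ge> e N \<longrightarrow> \<bar>rat_code (a k) (b k) (c k) - x\<bar> \<le> 1 / 2 ^ N))"

definition computable_real_seq :: "(nat \<Rightarrow> real) \<Rightarrow> bool" where
  "computable_real_seq x \<longleftrightarrow> (\<exists>a b c e. computable2 a \<and> computable2 b \<and> computable2 c \<and> computable2 e \<and>
     (\<forall>n N k. k \<ge> e n N \<longrightarrow> \<bar>rat_code (a n k) (b n k) (c n k) - x n\<bar> \<le> 1 / 2 ^ N))"

section \<open>Binary alphabets: X = Y = {0,1} modelled as bool (False = 0, True = 1)\<close>

definition is_dist :: "(bool \<Rightarrow> real) \<Rightarrow> bool" where
  "is_dist P \<longleftrightarrow> (\<forall>x. P x \<ge> 0) \<and> (\<Sum>x\<in>UNIV. P x) = 1"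

definition is_channel :: "(bool \<Rightarrow> bool \<Rightarrow> real) \<Rightarrow> bool" where
  "is_channel W \<longleftrightarrow> (\<forall>x. is_dist (W x))"

definition computable_dist :: "(bool \<Rightarrow> real) \<Rightarrow> bool" where
  "computable_dist P \<longleftrightarrow> is_dist P \<and> (\<forall>x. computable_real (P x))"

definition computable_dist_seq :: "(nat \<Rightarrow> bool \<Rightarrow> real) \<Rightarrow> bool" where
  "computable_dist_seq P \<longleftrightarrow> (\<forall>x. computable_real_seq (\<lambda>n. P n x))"

definition computable_channel_seq :: "(nat \<Rightarrow> bool \<Rightarrow> bool \<Rightarrow> real) \<Rightarrow> bool" where
  "computable_channel_seq W \<longleftrightarrow> (\<forall>x y. computable_real_seq (\<lambda>n. W n x y))"

definition bin_dist :: "real \<Rightarrow> real \<Rightarrow> bool \<Rightarrow> bool \<Rightarrow> real" where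
  "bin_dist d01 d10 x y = (if x = y then 0 else if x then d10 else d01)"

definition exp_distortion :: "(bool \<Rightarrow> bool \<Rightarrow> real) \<Rightarrow> (bool \<Rightarrow> real) \<Rightarrow> (bool \<Rightarrow> bool \<Rightarrow> real) \<Rightarrow> real" where
  "exp_distortion d P W = (\<Sum>x\<in>UNIV. \<Sum>y\<in>UNIV. P x * W x y * d x y)"

definition mutual_info :: "(bool \<Rightarrow> real) \<Rightarrow> (bool \<Rightarrow> bool \<Rightarrow> real) \<Rightarrow> real" where
  "mutual_info P W = (\<Sum>x\<in>UNIV. \<Sum>y\<in>UNIV.
      if P x * W x y = 0 then 0
      else P x * W x y * ln (W x y / (\<Sum>x'\<in>UNIV. P x' * W x' y)))"

definition rate_distortion :: "(bool \<Rightarrow> bool \<Rightarrow> real) \<Rightarrow> real \<Rightarrow> (bool \<Rightarrow> real) \<Rightarrow> real" where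
  "rate_distortion d D P = Inf {mutual_info P W | W. is_channel W \<and> exp_distortion d P W \<le> D}"

definition P_opt :: "(bool \<Rightarrow> bool \<Rightarrow> real) \<Rightarrow> real \<Rightarrow> (bool \<Rightarrow> real) \<Rightarrow> (bool \<Rightarrow> bool \<Rightarrow> real) set" where
  "P_opt d D P = {W. is_channel W \<and> exp_distortion d P W \<le> D \<and> mutual_info P W = rate_distortion d D P}"

definition optimal_selector :: "(bool \<Rightarrow> bool \<Rightarrow> real) \<Rightarrow> ((bool \<Rightarrow> real) \<Rightarrow> real \<Rightarrow> (bool \<Rightarrow> bool \<Rightarrow> real)) \<Rightarrow> bool" where
  "optimal_selector d F \<longleftrightarrow> (\<forall>P D. computable_dist P \<and> computable_real D \<and> P_opt d D P \<noteq> {}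
      \<longrightarrow> F P D \<in> P_opt d D P)"

definition BM_computable :: "(bool \<Rightarrow> bool \<Rightarrow> real) \<Rightarrow> ((bool \<Rightarrow> real) \<Rightarrow> real \<Rightarrow> (bool \<Rightarrow> bool \<Rightarrow> real)) \<Rightarrow> bool" where
  "BM_computable d F \<longleftrightarrow> (\<forall>PS DS. (\<forall>n. is_dist (PS n) \<and> P_opt d (DS n) (PS n) \<noteq> {})
      \<and> computable_dist_seq PS \<and> computable_real_seq DS
      \<longrightarrow> computable_channel_seq (\<lambda>n. F (PS n) (DS n)))"

end

theory Submission
  imports Defs "HOL-Library.Nat_Bijection"
begin

text \<open>Let \<open>\<sigma>\<^sub>n = \<plusminus>2 ^ -(L\<^sub>n + c)\<close>, where \<open>L\<^sub>n\<close> is the least code of a halting certificate for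
  program n run on its own code, with sign + iff that run outputs 0 (and \<open>\<sigma>\<^sub>n = 0\<close> if n does
  not halt). This is a computable real sequence: up to precision \<open>2 ^ -k\<close> it suffices to search
  the certificates below k. Take the source \<open>P\<^sub>n(1) = d01 / (d01 + d10) + \<sigma>\<^sub>n\<close>,
  \<open>P\<^sub>n(0) = d10 / (d01 + d10) - \<sigma>\<^sub>n\<close> and the level \<open>D\<^sub>n = min (P\<^sub>n(1) d10) (P\<^sub>n(0) d01)\<close>,
  the least distortion reachable at rate zero. An optimal test channel then has zero mutual
  information, so it ignores its input, and since \<open>P\<^sub>n(1) d10 - P\<^sub>n(0) d01 = \<sigma>\<^sub>n (d01 + d10)\<close>
  the distortion constraint fixes its output by the sign of \<open>\<sigma>\<^sub>n\<close>. A computable sequence of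
  optimal channels would therefore decide, for every program that halts on its own code, whether
  it outputs 0 there; diagonalising against such a decision procedure gives a contradiction.\<close>

section \<open>Recursive functions of finitely many arguments\<close>

definition computable_fn :: "nat \<Rightarrow> ((nat \<Rightarrow> nat) \<Rightarrow> nat) \<Rightarrow> bool" where
  "computable_fn n f \<longleftrightarrow> (\<exists>t. \<forall>e. eval t (map e [0..<n]) (f e))"

definition decidable_fn :: "nat \<Rightarrow> ((nat \<Rightarrow> nat) \<Rightarrow> bool) \<Rightarrow> bool" where
  "decidable_fn n P \<longleftrightarrow> computable_fn n (\<lambda>e. if P e then 1 else 0)"

lemma computable1_iff: "computable1 f \<longleftrightarrow> computable_fn 1 (\<lambda>e. f (e 0))"
proof
  assume "computable1 f"
  then obtain t where "\<And>n. eval t [n] (f n)" unfolding computable1_def by blast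
  then show "computable_fn 1 (\<lambda>e. f (e 0))" unfolding computable_fn_def by auto
next
  assume "computable_fn 1 (\<lambda>e. f (e 0))"
  then obtain t where t: "\<And>e. eval t (map e [0..<1]) (f (e 0))" unfolding computable_fn_def by blast
  have "eval t [n] (f n)" for n using t[of "\<lambda>_. n"] by simp
  then show "computable1 f" unfolding computable1_def by blast
qed

lemma computable2_iff: "computable2 f \<longleftrightarrow> computable_fn 2 (\<lambda>e. f (e 0) (e 1))"
proof
  assume "computable2 f"
  then obtain t where "\<And>m n. eval t [m, n] (f m n)" unfolding computable2_def by blast
  then show "computable_fn 2 (\<lambda>e. f (e 0) (e 1))"
    unfolding computable_fn_def by (auto simp: numeral_2_eq_2)
next
  assume "computable_fn 2 (\<lambda>e. f (e 0) (e 1))"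
  then obtain t where t: "\<And>e. eval t (map e [0..<2]) (f (e 0) (e 1))" unfolding computable_fn_def by blast
  have "eval t [m, n] (f m n)" for m n
    using t[of "\<lambda>i. if i = 0 then m else n"] by (simp add: numeral_2_eq_2)
  then show "computable2 f" unfolding computable2_def by blast
qed

lemma computable_fn_zero: "computable_fn n (\<lambda>e. 0)"
  unfolding computable_fn_def by (auto intro: eval_Zero)

lemma computable_fn_proj: "i < n \<Longrightarrow> computable_fn n (\<lambda>e. e i)"
  unfolding computable_fn_def using eval_Proj[of i "map _ [0..<n]"] by auto

lemma computable_fn_Suc1: "computable_fn 1 (\<lambda>e. Suc (e 0))"
  unfolding computable_fn_def by (auto intro: eval_Succ)

lemma computable_fn_compose:
  assumes "computable_fn m f" and "\<And>i. i < m \<Longrightarrow> computable_fn n (gs i)"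
  shows "computable_fn n (\<lambda>e. f (\<lambda>i. gs i e))"
proof -
  obtain tf where tf: "\<And>e. eval tf (map e [0..<m]) (f e)"
    using assms(1) unfolding computable_fn_def by blast
  have "\<forall>i<m. \<exists>t. \<forall>e. eval t (map e [0..<n]) (gs i e)"
    using assms(2) unfolding computable_fn_def by blast
  then obtain ts where ts: "\<And>i e. i < m \<Longrightarrow> eval (ts i) (map e [0..<n]) (gs i e)" by metis
  have "eval (Comp tf (map ts [0..<m])) (map e [0..<n]) (f (\<lambda>i. gs i e))" for e
  proof (rule eval_Comp)
    show "list_all2 (\<lambda>g v. eval g (map e [0..<n]) v) (map ts [0..<m]) (map (\<lambda>i. gs i e) [0..<m])"
      by (auto simp: list_all2_conv_all_nth ts)
  qed (use tf in simp)
  then show ?thesis unfolding computable_fn_def by blast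
qed

lemma computable_fn_compose1:
  "computable_fn 1 (\<lambda>e. F (e 0)) \<Longrightarrow> computable_fn n g \<Longrightarrow> computable_fn n (\<lambda>e. F (g e))"
  using computable_fn_compose[of 1 "\<lambda>e. F (e 0)" n "\<lambda>i. g"] by simp

lemma computable_fn_compose2:
  "computable_fn 2 (\<lambda>e. F (e 0) (e 1)) \<Longrightarrow> computable_fn n g \<Longrightarrow> computable_fn n h \<Longrightarrow>
    computable_fn n (\<lambda>e. F (g e) (h e))"
  using computable_fn_compose[of 2 "\<lambda>e. F (e 0) (e 1)" n "\<lambda>i. if i = 0 then g else h"]
  by (simp add: less_2_cases_iff)

lemma computable_fn_Suc: "computable_fn n g \<Longrightarrow> computable_fn n (\<lambda>e. Suc (g e))"
  using computable_fn_compose1[OF computable_fn_Suc1] .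

lemma computable_fn_const: "computable_fn n (\<lambda>e. c)"
  by (induction c) (auto intro: computable_fn_zero computable_fn_Suc)

definition env_cons :: "nat \<Rightarrow> (nat \<Rightarrow> nat) \<Rightarrow> nat \<Rightarrow> nat" where
  "env_cons a e = (\<lambda>i. case i of 0 \<Rightarrow> a | Suc j \<Rightarrow> e j)"

lemma map_env_cons_upt: "map (env_cons a e) [0..<Suc n] = a # map e [0..<n]"
  by (simp add: env_cons_def map_upt_Suc del: upt_Suc)

text \<open>The step function g sees the environment \<open>y, prim_rec_env f g y e, e 0, e 1, \<dots>\<close>,
  matching the argument order of \<^const>\<open>PrimRec\<close>.\<close>

fun prim_rec_env :: "((nat \<Rightarrow> nat) \<Rightarrow> nat) \<Rightarrow> ((nat \<Rightarrow> nat) \<Rightarrow> nat) \<Rightarrow> nat \<Rightarrow> (nat \<Rightarrow> nat) \<Rightarrow> nat" where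
  "prim_rec_env f g 0 e = f e"
| "prim_rec_env f g (Suc y) e = g (env_cons y (env_cons (prim_rec_env f g y e) e))"

lemma computable_fn_prim_rec:
  assumes "computable_fn n f" "computable_fn (Suc (Suc n)) g"
  shows "computable_fn (Suc n) (\<lambda>e. prim_rec_env f g (e 0) (\<lambda>i. e (Suc i)))"
proof -
  obtain tf where tf: "\<And>e. eval tf (map e [0..<n]) (f e)"
    using assms(1) unfolding computable_fn_def by blast
  obtain tg where tg: "\<And>e. eval tg (map e [0..<Suc (Suc n)]) (g e)"
    using assms(2) unfolding computable_fn_def by blast
  have PR: "eval (PrimRec tf tg) (y # map e [0..<n]) (prim_rec_env f g y e)" for y e
  proof (induction y)
    case 0
    then show ?case using tf by (auto intro: eval_PR0)
  next
    case (Suc y)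
    have "eval tg (y # prim_rec_env f g y e # map e [0..<n]) (prim_rec_env f g (Suc y) e)"
      using tg[of "env_cons y (env_cons (prim_rec_env f g y e) e)"]
      by (simp add: map_env_cons_upt del: upt_Suc)
    then show ?case using Suc by (auto intro: eval_PRS)
  qed
  have "map e [0..<Suc n] = e 0 # map (\<lambda>i. e (Suc i)) [0..<n]" for e :: "nat \<Rightarrow> nat"
    by (simp add: map_upt_Suc del: upt_Suc)
  then show ?thesis unfolding computable_fn_def using PR by metis
qed

lemma computable_fn_add:
  assumes "computable_fn n f" "computable_fn n g"
  shows "computable_fn n (\<lambda>e. f e + g e)"
proof (rule computable_fn_compose2[OF _ assms])
  have "computable_fn (Suc 1) (\<lambda>e. prim_rec_env (\<lambda>e. e 0) (\<lambda>e. Suc (e 1)) (e 0) (\<lambda>i. e (Suc i)))"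
    by (rule computable_fn_prim_rec) (auto intro!: computable_fn_proj computable_fn_Suc)
  moreover have "prim_rec_env (\<lambda>e. e 0) (\<lambda>e. Suc (e 1)) y e = y + e 0" for y e
    by (induction y) (auto simp: env_cons_def)
  ultimately show "computable_fn 2 (\<lambda>e. e 0 + e 1)" by (simp add: numeral_2_eq_2)
qed

lemma computable_fn_mult:
  assumes "computable_fn n f" "computable_fn n g"
  shows "computable_fn n (\<lambda>e. f e * g e)"
proof (rule computable_fn_compose2[OF _ assms])
  have "computable_fn (Suc 1) (\<lambda>e. prim_rec_env (\<lambda>e. 0) (\<lambda>e. e 1 + e 2) (e 0) (\<lambda>i. e (Suc i)))"
    by (rule computable_fn_prim_rec) (auto intro!: computable_fn_proj computable_fn_add computable_fn_zero)
  moreover have "prim_rec_env (\<lambda>e. 0) (\<lambda>e. e 1 + e 2) y e = y * e 0" for y e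
    by (induction y) (auto simp: env_cons_def numeral_2_eq_2)
  ultimately show "computable_fn 2 (\<lambda>e. e 0 * e 1)" by (simp add: numeral_2_eq_2)
qed

lemma computable_fn_pred:
  assumes "computable_fn n f"
  shows "computable_fn n (\<lambda>e. f e - 1)"
proof (rule computable_fn_compose1[OF _ assms])
  have "computable_fn (Suc 0) (\<lambda>e. prim_rec_env (\<lambda>e. 0) (\<lambda>e. e 0) (e 0) (\<lambda>i. e (Suc i)))"
    by (rule computable_fn_prim_rec) (auto intro!: computable_fn_proj computable_fn_zero)
  moreover have "prim_rec_env (\<lambda>e. 0) (\<lambda>e. e 0) y e = y - 1" for y e
    by (induction y) (auto simp: env_cons_def)
  ultimately show "computable_fn 1 (\<lambda>e. e 0 - 1)" by simp
qed

lemma computable_fn_diff: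
  assumes "computable_fn n f" "computable_fn n g"
  shows "computable_fn n (\<lambda>e. f e - g e)"
proof -
  have "computable_fn (Suc 1) (\<lambda>e. prim_rec_env (\<lambda>e. e 0) (\<lambda>e. e 1 - 1) (e 0) (\<lambda>i. e (Suc i)))"
    by (rule computable_fn_prim_rec[OF computable_fn_proj computable_fn_pred[OF computable_fn_proj]]) auto
  moreover have "prim_rec_env (\<lambda>e. e 0) (\<lambda>e. e 1 - 1) y e = e 0 - y" for y e
    by (induction y) (auto simp: env_cons_def)
  ultimately have "computable_fn 2 (\<lambda>e. e 1 - e 0)" by (simp add: numeral_2_eq_2)
  then show ?thesis using computable_fn_compose2[of "\<lambda>a b. b - a" n g f] assms by simp
qed

lemma computable_fn_sum_lessThan:
  assumes "computable_fn (Suc n) (\<lambda>e. F (e 0) (\<lambda>i. e (Suc i)))" "computable_fn n b"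
  shows "computable_fn n (\<lambda>e. \<Sum>i<b e. F i e)"
proof -
  define G where "G = (\<lambda>e::nat \<Rightarrow> nat. e 1 + F (e 0) (\<lambda>i. e (Suc (Suc i))))"
  have shift: "computable_fn (Suc (Suc n)) (\<lambda>e. if i = 0 then e 0 else e (Suc i))" if "i < Suc n" for i
    using that by (cases i) (auto intro: computable_fn_proj)
  from computable_fn_compose[where gs = "\<lambda>i e. if i = 0 then e 0 else e (Suc i)", OF assms(1) shift]
  have "computable_fn (Suc (Suc n)) (\<lambda>e. F (e 0) (\<lambda>i. e (Suc (Suc i))))" by simp
  then have "computable_fn (Suc (Suc n)) G"
    unfolding G_def by (intro computable_fn_add computable_fn_proj) auto
  then have PR: "computable_fn (Suc n) (\<lambda>e. prim_rec_env (\<lambda>e. 0) G (e 0) (\<lambda>i. e (Suc i)))"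
    by (rule computable_fn_prim_rec[OF computable_fn_zero])
  have sum: "prim_rec_env (\<lambda>e. 0) G y e = (\<Sum>i<y. F i e)" for y e
    by (induction y) (auto simp: G_def env_cons_def)
  have args: "computable_fn n (\<lambda>e. if i = 0 then b e else e (i - 1))" if "i < Suc n" for i
    using that by (cases i) (auto intro: computable_fn_proj assms(2))
  from computable_fn_compose[where gs = "\<lambda>i e. if i = 0 then b e else e (i - 1)", OF PR args]
  have "computable_fn n (\<lambda>e. prim_rec_env (\<lambda>e. 0) G (b e) e)" by simp
  then show ?thesis by (simp add: sum)
qed

lemma computable_fn_funpow:
  assumes "computable_fn 1 (\<lambda>e. F (e 0))" "computable_fn n g" "computable_fn n h"
  shows "computable_fn n (\<lambda>e. (F ^^ g e) (h e))"
proof (rule computable_fn_compose2[OF _ assms(2,3)])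
  have "computable_fn (Suc 1) (\<lambda>e. prim_rec_env (\<lambda>e. e 0) (\<lambda>e. F (e 1)) (e 0) (\<lambda>i. e (Suc i)))"
    by (rule computable_fn_prim_rec) (auto intro: computable_fn_proj computable_fn_compose1[OF assms(1)])
  moreover have "prim_rec_env (\<lambda>e. e 0) (\<lambda>e. F (e 1)) y e = (F ^^ y) (e 0)" for y e
    by (induction y) (auto simp: env_cons_def)
  ultimately show "computable_fn 2 (\<lambda>e. (F ^^ e 0) (e 1))" by (simp add: numeral_2_eq_2)
qed

lemma computable_fn_cong: "computable_fn n f \<Longrightarrow> (\<And>e. f e = g e) \<Longrightarrow> computable_fn n g"
  by (metis ext)

lemma decidable_fn_eq:
  assumes "computable_fn n f" "computable_fn n g"
  shows "decidable_fn n (\<lambda>e. f e = g e)"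
proof -
  have "computable_fn n (\<lambda>e. 1 - ((f e - g e) + (g e - f e)))"
    by (intro computable_fn_diff computable_fn_add assms computable_fn_const)
  then show ?thesis unfolding decidable_fn_def by (rule computable_fn_cong) auto
qed

lemma decidable_fn_less:
  assumes "computable_fn n f" "computable_fn n g"
  shows "decidable_fn n (\<lambda>e. f e < g e)"
proof -
  have "computable_fn n (\<lambda>e. 1 - (1 - (g e - f e)))"
    by (intro computable_fn_diff assms computable_fn_const)
  then show ?thesis unfolding decidable_fn_def by (rule computable_fn_cong) auto
qed

lemma decidable_fn_le:
  assumes "computable_fn n f" "computable_fn n g"
  shows "decidable_fn n (\<lambda>e. f e \<le> g e)"
proof -
  have "computable_fn n (\<lambda>e. 1 - (f e - g e))"
    by (intro computable_fn_diff assms computable_fn_const)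
  then show ?thesis unfolding decidable_fn_def by (rule computable_fn_cong) auto
qed

lemma decidable_fn_not: "decidable_fn n P \<Longrightarrow> decidable_fn n (\<lambda>e. \<not> P e)"
  unfolding decidable_fn_def
  by (rule computable_fn_cong, rule computable_fn_diff[OF computable_fn_const[of n 1]]) auto

lemma decidable_fn_conj:
  assumes "decidable_fn n P" "decidable_fn n Q"
  shows "decidable_fn n (\<lambda>e. P e \<and> Q e)"
proof -
  have "computable_fn n (\<lambda>e. (if P e then 1 else 0) * (if Q e then 1 else 0))"
    using assms unfolding decidable_fn_def by (rule computable_fn_mult)
  then show ?thesis unfolding decidable_fn_def by (rule computable_fn_cong) auto
qed

lemma decidable_fn_disj: "decidable_fn n P \<Longrightarrow> decidable_fn n Q \<Longrightarrow> decidable_fn n (\<lambda>e. P e \<or> Q e)"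
proof -
  assume "decidable_fn n P" "decidable_fn n Q"
  then have "decidable_fn n (\<lambda>e. \<not> (\<not> P e \<and> \<not> Q e))"
    by (intro decidable_fn_not decidable_fn_conj)
  then show ?thesis by simp
qed

lemma decidable_fn_const: "decidable_fn n (\<lambda>e. c)"
  unfolding decidable_fn_def by (rule computable_fn_const)

lemma computable_fn_If:
  assumes "decidable_fn n P" "computable_fn n f" "computable_fn n g"
  shows "computable_fn n (\<lambda>e. if P e then f e else g e)"
proof -
  have "computable_fn n (\<lambda>e. (if P e then 1 else 0) * f e + (1 - (if P e then 1 else 0)) * g e)"
    using assms unfolding decidable_fn_def
    by (intro computable_fn_add computable_fn_mult computable_fn_diff computable_fn_const)
  then show ?thesis by (rule computable_fn_cong) auto
qed

lemma decidable_fn_bex_lessThan: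
  assumes "decidable_fn (Suc n) (\<lambda>e. P (e 0) (\<lambda>i. e (Suc i)))" "computable_fn n b"
  shows "decidable_fn n (\<lambda>e. \<exists>i<b e. P i e)"
proof -
  have "computable_fn n (\<lambda>e. \<Sum>i<b e. if P i e then 1 else 0)"
    using assms unfolding decidable_fn_def by (rule computable_fn_sum_lessThan)
  then have "decidable_fn n (\<lambda>e. 0 < (\<Sum>i<b e. if P i e then 1 else 0::nat))"
    by (intro decidable_fn_less computable_fn_const)
  moreover have "0 < (\<Sum>i<k. if P i e then 1 else 0::nat) \<longleftrightarrow> (\<exists>i<k. P i e)" for k e
    by (induction k) (auto simp: less_Suc_eq)
  ultimately show ?thesis by simp
qed

lemma decidable_fn_ball_lessThan:
  assumes "decidable_fn (Suc n) (\<lambda>e. P (e 0) (\<lambda>i. e (Suc i)))" "computable_fn n b"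
  shows "decidable_fn n (\<lambda>e. \<forall>i<b e. P i e)"
  using decidable_fn_not[OF decidable_fn_bex_lessThan[OF decidable_fn_not[OF assms(1)] assms(2)]]
  by simp

lemmas computable_fn_intros = computable_fn_proj computable_fn_const computable_fn_Suc
  computable_fn_add computable_fn_mult computable_fn_diff computable_fn_If computable_fn_sum_lessThan
  decidable_fn_eq decidable_fn_less decidable_fn_le decidable_fn_not decidable_fn_conj
  decidable_fn_disj decidable_fn_const decidable_fn_bex_lessThan decidable_fn_ball_lessThan

section \<open>Computable coding of pairs, triples and lists\<close>

lemma triangle_eq_sum: "triangle n = (\<Sum>i<n. Suc i)"
  by (induction n) auto

text \<open>The index of the anti-diagonal containing n in Cantor's enumeration of pairs.\<close>

definition diagonal_index :: "nat \<Rightarrow> nat" where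
  "diagonal_index n = (\<Sum>t<n. if triangle (Suc t) \<le> n then 1 else 0)"

lemma triangle_mono: "m \<le> k \<Longrightarrow> triangle m \<le> triangle k"
  by (induction k) (auto simp: le_Suc_eq)

lemma le_triangle: "n \<le> triangle n"
  by (induction n) auto

lemma diagonal_index_prod_encode: "diagonal_index (prod_encode (a, b)) = a + b"
proof -
  let ?n = "prod_encode (a, b)"
  have below: "triangle (Suc t) \<le> ?n \<longleftrightarrow> t < a + b" for t
  proof
    assume "t < a + b"
    then have "triangle (Suc t) \<le> triangle (a + b)" by (intro triangle_mono) auto
    then show "triangle (Suc t) \<le> ?n" by (simp add: prod_encode_def)
  next
    assume "triangle (Suc t) \<le> ?n"
    then have "\<not> triangle (Suc (a + b)) \<le> triangle (Suc t)" by (simp add: prod_encode_def)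
    then show "t < a + b" using triangle_mono[of "Suc (a + b)" "Suc t"] by linarith
  qed
  have "a + b \<le> ?n" using le_triangle[of "a + b"] by (simp add: prod_encode_def)
  then have "{t. t < ?n \<and> t < a + b} = {..<a + b}" by auto
  then show ?thesis unfolding diagonal_index_def below by (simp add: sum.If_cases Int_def)
qed

lemma prod_decode_eq_diagonal_index:
  "prod_decode n = (n - triangle (diagonal_index n), diagonal_index n - (n - triangle (diagonal_index n)))"
proof -
  obtain a b where "n = prod_encode (a, b)" by (metis prod_decode_inverse surj_pair)
  then show ?thesis by (simp add: diagonal_index_prod_encode) (simp add: prod_encode_def)
qed

lemma computable_fn_triangle:
  assumes "computable_fn n g"
  shows "computable_fn n (\<lambda>e. triangle (g e))"
proof (rule computable_fn_compose1[OF _ assms])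
  show "computable_fn 1 (\<lambda>e. triangle (e 0))"
    unfolding triangle_eq_sum by (intro computable_fn_intros) auto
qed

lemma computable_fn_diagonal_index:
  assumes "computable_fn n g"
  shows "computable_fn n (\<lambda>e. diagonal_index (g e))"
proof (rule computable_fn_compose1[OF _ assms])
  show "computable_fn 1 (\<lambda>e. diagonal_index (e 0))"
    unfolding diagonal_index_def by (intro computable_fn_intros computable_fn_triangle) auto
qed

lemma computable_fn_prod_encode:
  "computable_fn n g \<Longrightarrow> computable_fn n h \<Longrightarrow> computable_fn n (\<lambda>e. prod_encode (g e, h e))"
  unfolding prod_encode_def by (simp, intro computable_fn_intros computable_fn_triangle)

lemma computable_fn_fst_prod_decode: "computable_fn n g \<Longrightarrow> computable_fn n (\<lambda>e. fst (prod_decode (g e)))"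
  unfolding prod_decode_eq_diagonal_index
  by (simp, intro computable_fn_intros computable_fn_triangle computable_fn_diagonal_index)

lemma computable_fn_snd_prod_decode: "computable_fn n g \<Longrightarrow> computable_fn n (\<lambda>e. snd (prod_decode (g e)))"
  unfolding prod_decode_eq_diagonal_index
  by (simp, intro computable_fn_intros computable_fn_triangle computable_fn_diagonal_index)

definition triple_encode :: "nat \<Rightarrow> nat \<Rightarrow> nat \<Rightarrow> nat" where
  "triple_encode a b c = prod_encode (a, prod_encode (b, c))"

definition triple_fst :: "nat \<Rightarrow> nat" where "triple_fst z = fst (prod_decode z)"
definition triple_snd :: "nat \<Rightarrow> nat" where "triple_snd z = fst (prod_decode (snd (prod_decode z)))"
definition triple_thd :: "nat \<Rightarrow> nat" where "triple_thd z = snd (prod_decode (snd (prod_decode z)))"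

lemma triple_sel [simp]:
  "triple_fst (triple_encode a b c) = a"
  "triple_snd (triple_encode a b c) = b"
  "triple_thd (triple_encode a b c) = c"
  by (simp_all add: triple_encode_def triple_fst_def triple_snd_def triple_thd_def)

lemma triple_encode_triple_sel: "triple_encode (triple_fst r) (triple_snd r) (triple_thd r) = r"
  by (simp add: triple_encode_def triple_fst_def triple_snd_def triple_thd_def)

lemma computable_fn_triple_encode:
  "computable_fn n f \<Longrightarrow> computable_fn n g \<Longrightarrow> computable_fn n h \<Longrightarrow>
    computable_fn n (\<lambda>e. triple_encode (f e) (g e) (h e))"
  unfolding triple_encode_def by (intro computable_fn_prod_encode)

lemma computable_fn_triple_fst: "computable_fn n g \<Longrightarrow> computable_fn n (\<lambda>e. triple_fst (g e))"
  unfolding triple_fst_def by (rule computable_fn_fst_prod_decode)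

lemma computable_fn_triple_snd: "computable_fn n g \<Longrightarrow> computable_fn n (\<lambda>e. triple_snd (g e))"
  unfolding triple_snd_def by (intro computable_fn_fst_prod_decode computable_fn_snd_prod_decode)

lemma computable_fn_triple_thd: "computable_fn n g \<Longrightarrow> computable_fn n (\<lambda>e. triple_thd (g e))"
  unfolding triple_thd_def by (intro computable_fn_snd_prod_decode)

definition list_cons :: "nat \<Rightarrow> nat \<Rightarrow> nat" where "list_cons x l = Suc (prod_encode (x, l))"
definition list_hd :: "nat \<Rightarrow> nat" where "list_hd l = fst (prod_decode (l - 1))"
definition list_tl :: "nat \<Rightarrow> nat" where "list_tl l = snd (prod_decode (l - 1))"
definition list_drop :: "nat \<Rightarrow> nat \<Rightarrow> nat" where "list_drop j l = (list_tl ^^ j) l"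
definition list_length :: "nat \<Rightarrow> nat" where
  "list_length l = (\<Sum>j<l. if list_drop j l = 0 then 0 else 1)"
definition list_nth :: "nat \<Rightarrow> nat \<Rightarrow> nat" where "list_nth l j = list_hd (list_drop j l)"

lemma list_encode_Cons [simp]: "list_encode (x # xs) = list_cons x (list_encode xs)"
  by (simp add: list_cons_def)

declare list_encode.simps(2) [simp del]

lemma list_hd_list_cons [simp]: "list_hd (list_cons x l) = x"
  by (simp add: list_hd_def list_cons_def)

lemma list_tl_list_cons [simp]: "list_tl (list_cons x l) = l"
  by (simp add: list_tl_def list_cons_def)

lemma list_encode_eq_0_iff [simp]: "list_encode xs = 0 \<longleftrightarrow> xs = []"
  by (cases xs) (simp_all add: list_cons_def)

lemma list_cons_nonzero [simp]: "list_cons x l \<noteq> 0"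
  by (simp add: list_cons_def)

lemma list_decode_list_cons [simp]: "list_decode (list_cons x l) = x # list_decode l"
  by (simp add: list_cons_def)

lemma list_decode_eq_Nil_iff: "list_decode l = [] \<longleftrightarrow> l = 0"
  by (cases l) (auto split: prod.split)

lemma list_decode_list_hd: "l \<noteq> 0 \<Longrightarrow> list_hd l = hd (list_decode l)"
  by (cases l) (auto simp: list_hd_def split: prod.split)

lemma list_decode_list_tl: "list_decode (list_tl l) = tl (list_decode l)"
proof (cases l)
  case 0
  then show ?thesis by (simp add: list_tl_def prod_decode_def prod_decode_aux.simps)
qed (auto simp: list_tl_def split: prod.split)

lemma list_decode_nonzero: "xs \<noteq> 0 \<Longrightarrow> list_decode xs = list_hd xs # list_decode (list_tl xs)"
  by (metis list_decode_list_hd list_decode_list_tl list_decode_eq_Nil_iff list.collapse)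

lemma list_decode_list_drop: "list_decode (list_drop j l) = drop j (list_decode l)"
  by (induction j) (simp_all add: list_drop_def list_decode_list_tl drop_Suc tl_drop)

lemma length_list_decode_le: "length (list_decode l) \<le> l"
proof (induction l rule: list_decode.induct)
  case (2 n)
  then show ?case by (auto split: prod.split) (metis le_prod_encode_2 prod_decode_inverse le_trans)
qed simp

lemma list_length_eq: "list_length l = length (list_decode l)"
proof -
  have "list_length l = (\<Sum>j<l. if j < length (list_decode l) then 1 else 0)"
    unfolding list_length_def
    by (intro sum.cong refl) (metis list_decode_list_drop list_decode_eq_Nil_iff drop_eq_Nil not_le)
  also have "\<dots> = card {j. j < l \<and> j < length (list_decode l)}"
    by (simp add: sum.If_cases Int_def)
  also have "{j. j < l \<and> j < length (list_decode l)} = {..<length (list_decode l)}"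
    using length_list_decode_le[of l] by auto
  finally show ?thesis by simp
qed

lemma list_nth_eq: "j < length (list_decode l) \<Longrightarrow> list_nth l j = list_decode l ! j"
  unfolding list_nth_def
  by (metis list_decode_list_hd list_decode_list_drop list_decode_eq_Nil_iff drop_eq_Nil hd_drop_conv_nth
      not_le)

lemma list_length_list_encode [simp]: "list_length (list_encode xs) = length xs"
  by (simp add: list_length_eq)

lemma list_nth_list_encode [simp]: "j < length xs \<Longrightarrow> list_nth (list_encode xs) j = xs ! j"
  by (simp add: list_nth_eq)

lemma computable_fn_list_cons:
  "computable_fn n g \<Longrightarrow> computable_fn n h \<Longrightarrow> computable_fn n (\<lambda>e. list_cons (g e) (h e))"
  unfolding list_cons_def by (intro computable_fn_Suc computable_fn_prod_encode)

lemma computable_fn_list_hd: "computable_fn n g \<Longrightarrow> computable_fn n (\<lambda>e. list_hd (g e))"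
  unfolding list_hd_def by (intro computable_fn_fst_prod_decode computable_fn_intros)

lemma computable_fn_list_tl: "computable_fn n g \<Longrightarrow> computable_fn n (\<lambda>e. list_tl (g e))"
  unfolding list_tl_def by (intro computable_fn_snd_prod_decode computable_fn_intros)

lemma computable_fn_list_drop:
  assumes "computable_fn n g" "computable_fn n h"
  shows "computable_fn n (\<lambda>e. list_drop (g e) (h e))"
  unfolding list_drop_def
  by (rule computable_fn_funpow[OF computable_fn_list_tl[OF computable_fn_proj] assms]) simp

lemma computable_fn_list_length:
  assumes "computable_fn n g"
  shows "computable_fn n (\<lambda>e. list_length (g e))"
proof (rule computable_fn_compose1[OF _ assms])
  show "computable_fn 1 (\<lambda>e. list_length (e 0))"
    unfolding list_length_def by (intro computable_fn_intros computable_fn_list_drop) auto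
qed

lemma computable_fn_list_nth:
  "computable_fn n g \<Longrightarrow> computable_fn n h \<Longrightarrow> computable_fn n (\<lambda>e. list_nth (g e) (h e))"
  unfolding list_nth_def by (intro computable_fn_list_hd computable_fn_list_drop)

lemmas computable_fn_coding_intros = computable_fn_intros computable_fn_prod_encode
  computable_fn_fst_prod_decode computable_fn_snd_prod_decode
  computable_fn_triple_encode computable_fn_triple_fst computable_fn_triple_snd computable_fn_triple_thd
  computable_fn_list_cons computable_fn_list_hd computable_fn_list_tl computable_fn_list_length
  computable_fn_list_nth

section \<open>A universal trace checker and self-application\<close>

fun recf_code :: "recf \<Rightarrow> nat" where
  "recf_code Zero = prod_encode (0, 0)"
| "recf_code Succ = prod_encode (1, 0)"
| "recf_code (Proj i) = prod_encode (2, i)"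
| "recf_code (Comp f gs) = prod_encode (3, prod_encode (recf_code f, list_encode (map recf_code gs)))"
| "recf_code (PrimRec f g) = prod_encode (4, prod_encode (recf_code f, recf_code g))"
| "recf_code (Mu f) = prod_encode (5, recf_code f)"

text \<open>A record \<open>triple_encode c xs v\<close> claims that the program with code c maps the argument list
  with code xs to v. It is justified if it follows by one rule of \<^const>\<open>eval\<close> from earlier
  records, where \<open>Q P\<close> says that some earlier record satisfies P. Keeping Q abstract lets the same
  definition serve the semantic check (\<open>Q = Bex S\<close>) and the decidable one (a bounded search).\<close>

definition justified :: "((nat \<Rightarrow> bool) \<Rightarrow> bool) \<Rightarrow> nat \<Rightarrow> bool" where
  "justified Q r \<longleftrightarrow>
    (let c = triple_fst r; tag = fst (prod_decode c); a = snd (prod_decode c);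
         c1 = fst (prod_decode a); c2 = snd (prod_decode a); xs = triple_snd r; v = triple_thd r in
      (tag = 0 \<and> v = 0) \<or>
      (tag = 1 \<and> xs \<noteq> 0 \<and> v = Suc (list_hd xs)) \<or>
      (tag = 2 \<and> a < list_length xs \<and> v = list_nth xs a) \<or>
      (tag = 3 \<and> Q (\<lambda>r'. triple_fst r' = c1 \<and> triple_thd r' = v \<and>
          list_length (triple_snd r') = list_length c2 \<and>
          (\<forall>l<list_length c2. Q (\<lambda>r''. r'' = triple_encode (list_nth c2 l) xs (list_nth (triple_snd r') l))))) \<or>
      (tag = 4 \<and> xs \<noteq> 0 \<and> list_hd xs = 0 \<and> Q (\<lambda>r'. r' = triple_encode c1 (list_tl xs) v)) \<or>
      (tag = 4 \<and> xs \<noteq> 0 \<and> list_hd xs \<noteq> 0 \<and>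
        Q (\<lambda>r'. triple_fst r' = c \<and> triple_snd r' = list_cons (list_hd xs - 1) (list_tl xs) \<and>
          Q (\<lambda>r''. r'' = triple_encode c2 (list_cons (list_hd xs - 1) (list_cons (triple_thd r') (list_tl xs))) v))) \<or>
      (tag = 5 \<and> Q (\<lambda>r'. r' = triple_encode a (list_cons v xs) 0) \<and>
        (\<forall>z<v. Q (\<lambda>r'. triple_fst r' = a \<and> triple_snd r' = list_cons z xs \<and> 0 < triple_thd r'))))"

lemma justified_Zero: "justified Q (triple_encode (recf_code Zero) xs v) \<longleftrightarrow> v = 0"
  by (simp add: justified_def Let_def)

lemma justified_Succ: "justified Q (triple_encode (recf_code Succ) xs v) \<longleftrightarrow> xs \<noteq> 0 \<and> v = Suc (list_hd xs)"
  by (simp add: justified_def Let_def)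

lemma justified_Proj:
  "justified Q (triple_encode (recf_code (Proj i)) xs v) \<longleftrightarrow> i < list_length xs \<and> v = list_nth xs i"
  by (simp add: justified_def Let_def)

lemma justified_Comp:
  "justified Q (triple_encode (recf_code (Comp f gs)) xs v) \<longleftrightarrow>
    Q (\<lambda>r'. triple_fst r' = recf_code f \<and> triple_thd r' = v \<and> list_length (triple_snd r') = length gs \<and>
      (\<forall>l<length gs. Q (\<lambda>r''. r'' = triple_encode (recf_code (gs ! l)) xs (list_nth (triple_snd r') l))))"
  by (simp add: justified_def Let_def cong: conj_cong)

lemma justified_PrimRec:
  "justified Q (triple_encode (recf_code (PrimRec f g)) xs v) \<longleftrightarrow> xs \<noteq> 0 \<and>
    (if list_hd xs = 0 then Q (\<lambda>r'. r' = triple_encode (recf_code f) (list_tl xs) v)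
     else Q (\<lambda>r'. triple_fst r' = recf_code (PrimRec f g) \<and> triple_snd r' = list_cons (list_hd xs - 1) (list_tl xs) \<and>
       Q (\<lambda>r''. r'' = triple_encode (recf_code g)
         (list_cons (list_hd xs - 1) (list_cons (triple_thd r') (list_tl xs))) v)))"
  by (auto simp: justified_def Let_def)

lemma justified_Mu:
  "justified Q (triple_encode (recf_code (Mu f)) xs v) \<longleftrightarrow>
    Q (\<lambda>r'. r' = triple_encode (recf_code f) (list_cons v xs) 0) \<and>
    (\<forall>z<v. Q (\<lambda>r'. triple_fst r' = recf_code f \<and> triple_snd r' = list_cons z xs \<and> 0 < triple_thd r'))"
  by (simp add: justified_def Let_def)

declare recf_code.simps [simp del]

definition sound_records :: "nat set \<Rightarrow> bool" where
  "sound_records S \<longleftrightarrow> (\<forall>t xs v. triple_encode (recf_code t) xs v \<in> S \<longrightarrow> eval t (list_decode xs) v)"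

lemma sound_records_eval:
  "sound_records S \<Longrightarrow> triple_encode (recf_code t) xs v \<in> S \<Longrightarrow> eval t (list_decode xs) v"
  unfolding sound_records_def by blast

lemma sound_recordsD:
  "sound_records S \<Longrightarrow> r \<in> S \<Longrightarrow> triple_fst r = recf_code t \<Longrightarrow> eval t (list_decode (triple_snd r)) (triple_thd r)"
  unfolding sound_records_def by (metis triple_encode_triple_sel)

lemma justified_Comp_sound:
  assumes "justified (Bex S) (triple_encode (recf_code (Comp f gs)) xs v)" "sound_records S"
  shows "eval (Comp f gs) (list_decode xs) v"
proof -
  obtain r where r: "r \<in> S" "triple_fst r = recf_code f" "triple_thd r = v"
    "list_length (triple_snd r) = length gs"
    and args: "\<forall>l<length gs. triple_encode (recf_code (gs ! l)) xs (list_nth (triple_snd r) l) \<in> S"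
    using assms(1) unfolding justified_Comp by auto
  have "list_all2 (\<lambda>g w. eval g (list_decode xs) w) gs (list_decode (triple_snd r))"
    using r(4) args sound_records_eval[OF assms(2)] by (auto simp: list_all2_conv_all_nth list_length_eq list_nth_eq)
  then show ?thesis using sound_recordsD[OF assms(2) r(1,2)] r(3) by (auto intro: eval_Comp)
qed

lemma justified_PrimRec_sound:
  assumes "justified (Bex S) (triple_encode (recf_code (PrimRec f g)) xs v)" "sound_records S"
  shows "eval (PrimRec f g) (list_decode xs) v"
proof -
  note just = assms(1)[unfolded justified_PrimRec]
  then have xs: "list_decode xs = list_hd xs # list_decode (list_tl xs)" by (simp add: list_decode_nonzero)
  show ?thesis
  proof (cases "list_hd xs")
    case 0
    then show ?thesis using just xs sound_records_eval[OF assms(2)] by (auto intro: eval_PR0)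
  next
    case (Suc y)
    then obtain r where r: "r \<in> S" "triple_fst r = recf_code (PrimRec f g)" "triple_snd r = list_cons y (list_tl xs)"
      "triple_encode (recf_code g) (list_cons y (list_cons (triple_thd r) (list_tl xs))) v \<in> S"
      using just by auto
    have "eval (PrimRec f g) (y # list_decode (list_tl xs)) (triple_thd r)"
      using sound_recordsD[OF assms(2) r(1,2)] r(3) by simp
    moreover have "eval g (y # triple_thd r # list_decode (list_tl xs)) v"
      using sound_records_eval[OF assms(2) r(4)] by simp
    ultimately show ?thesis using xs Suc by (auto intro: eval_PRS)
  qed
qed

lemma justified_Mu_sound:
  assumes "justified (Bex S) (triple_encode (recf_code (Mu f)) xs v)" "sound_records S"
  shows "eval (Mu f) (list_decode xs) v"
proof (rule eval_Mu)
  have "triple_encode (recf_code f) (list_cons v xs) 0 \<in> S"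
    and below: "\<forall>z<v. \<exists>r\<in>S. triple_fst r = recf_code f \<and> triple_snd r = list_cons z xs \<and> 0 < triple_thd r"
    using assms(1) unfolding justified_Mu by auto
  then show "eval f (v # list_decode xs) 0"
    using sound_records_eval[OF assms(2)] by fastforce
  show "\<exists>w>0. eval f (z # list_decode xs) w" if z: "z < v" for z
  proof -
    obtain r where "r \<in> S" "triple_fst r = recf_code f" "triple_snd r = list_cons z xs" "0 < triple_thd r"
      using below z by blast
    then show ?thesis using sound_recordsD[OF assms(2)] by fastforce
  qed
qed

lemma justified_sound:
  assumes "justified (Bex S) (triple_encode (recf_code t) xs v)" "sound_records S"
  shows "eval t (list_decode xs) v"
proof (cases t)
  case Zero
  then show ?thesis using assms(1) unfolding Zero justified_Zero by (simp add: eval_Zero)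
next
  case Succ
  then show ?thesis using assms(1) unfolding Succ justified_Succ
    by (auto simp: list_decode_nonzero intro: eval_Succ)
next
  case (Proj i)
  then show ?thesis using assms(1) unfolding Proj justified_Proj
    by (auto simp: list_length_eq list_nth_eq intro: eval_Proj)
next
  case (Comp f gs)
  then show ?thesis using assms justified_Comp_sound by simp
next
  case (PrimRec f g)
  then show ?thesis using assms justified_PrimRec_sound by simp
next
  case (Mu f)
  then show ?thesis using assms justified_Mu_sound by simp
qed

definition valid_trace :: "nat list \<Rightarrow> bool" where
  "valid_trace rs \<longleftrightarrow> (\<forall>i<length rs. justified (Bex (set (take i rs))) (rs ! i))"

lemma justified_mono:
  assumes "justified Q r" and mono: "\<And>P P'. Q P \<Longrightarrow> (\<And>x. P x \<Longrightarrow> P' x) \<Longrightarrow> Q' P'"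
  shows "justified Q' r"
proof -
  have lift: "Q' P" if "Q P" for P
    using that by (rule mono)
  show ?thesis
    using assms(1) unfolding justified_def Let_def
    by (elim disjE) (auto simp: lift elim!: mono)
qed

lemma justified_subset: "justified (Bex S) r \<Longrightarrow> S \<subseteq> S' \<Longrightarrow> justified (Bex S') r"
  by (erule justified_mono) blast

lemma valid_trace_sound:
  assumes "valid_trace rs" "triple_encode (recf_code t) xs v \<in> set rs"
  shows "eval t (list_decode xs) v"
proof -
  have "eval t (list_decode xs) v" if "i < length rs" "rs ! i = triple_encode (recf_code t) xs v" for i t xs v
    using that
  proof (induction i arbitrary: t xs v rule: less_induct)
    case (less i)
    have "justified (Bex (set (take i rs))) (triple_encode (recf_code t) xs v)"
      using assms(1) less.prems unfolding valid_trace_def by metis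
    moreover have "sound_records (set (take i rs))"
      unfolding sound_records_def using less.IH less.prems(1) by (auto simp: in_set_conv_nth)
    ultimately show ?case by (rule justified_sound)
  qed
  then show ?thesis using assms(2) by (metis in_set_conv_nth)
qed

lemma valid_trace_Nil: "valid_trace []"
  by (simp add: valid_trace_def)

lemma valid_trace_append: "valid_trace rs \<Longrightarrow> valid_trace ss \<Longrightarrow> valid_trace (rs @ ss)"
  unfolding valid_trace_def
proof (intro allI impI)
  fix i assume rs: "\<forall>i<length rs. justified (Bex (set (take i rs))) (rs ! i)"
    and ss: "\<forall>i<length ss. justified (Bex (set (take i ss))) (ss ! i)" and i: "i < length (rs @ ss)"
  show "justified (Bex (set (take i (rs @ ss)))) ((rs @ ss) ! i)"
  proof (cases "i < length rs")
    case True
    then show ?thesis using rs by (simp add: nth_append)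
  next
    case False
    then have "justified (Bex (set (take (i - length rs) ss))) (ss ! (i - length rs))" using ss i by simp
    moreover have "set (take (i - length rs) ss) \<subseteq> set (take i (rs @ ss))" using False by auto
    ultimately show ?thesis using False by (simp add: nth_append justified_subset)
  qed
qed

lemma valid_trace_snoc: "valid_trace rs \<Longrightarrow> justified (Bex (set rs)) r \<Longrightarrow> valid_trace (rs @ [r])"
  unfolding valid_trace_def by (auto simp: nth_append less_Suc_eq)

lemma valid_trace_justified:
  assumes "valid_trace rs" "r \<in> set rs"
  shows "justified (Bex (set rs)) r"
proof -
  obtain i where "i < length rs" "rs ! i = r" using assms(2) by (auto simp: in_set_conv_nth)
  then have "justified (Bex (set (take i rs))) r" using assms(1) unfolding valid_trace_def by blast
  then show ?thesis using set_take_subset by (rule justified_subset)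
qed

definition traced :: "recf \<Rightarrow> nat list \<Rightarrow> nat \<Rightarrow> bool" where
  "traced t xs v \<longleftrightarrow> (\<exists>rs. valid_trace rs \<and> triple_encode (recf_code t) (list_encode xs) v \<in> set rs)"

lemma tracedI:
  "valid_trace rs \<Longrightarrow> justified (Bex (set rs)) (triple_encode (recf_code t) (list_encode xs) v) \<Longrightarrow> traced t xs v"
  unfolding traced_def using valid_trace_snoc by fastforce

lemma traced_collect:
  fixes n :: nat
  assumes "\<And>i. i < n \<Longrightarrow> traced (t i) (xs i) (v i)"
  shows "\<exists>rs. valid_trace rs \<and> (\<forall>i<n. triple_encode (recf_code (t i)) (list_encode (xs i)) (v i) \<in> set rs)"
  using assms
proof (induction n)
  case 0
  then show ?case using valid_trace_Nil by blast
next
  case (Suc n)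
  then obtain rs ss where "valid_trace rs" "\<forall>i<n. triple_encode (recf_code (t i)) (list_encode (xs i)) (v i) \<in> set rs"
    "valid_trace ss" "triple_encode (recf_code (t n)) (list_encode (xs n)) (v n) \<in> set ss"
    unfolding traced_def by (meson less_SucI lessI)
  then show ?case using valid_trace_append by (metis Un_iff less_Suc_eq set_append)
qed

lemma traced_Comp:
  assumes "list_all2 (\<lambda>g w. traced g xs w) gs ys" "traced f ys v"
  shows "traced (Comp f gs) xs v"
proof -
  obtain rs where rs: "valid_trace rs"
    "\<forall>l<length gs. triple_encode (recf_code (gs ! l)) (list_encode xs) (ys ! l) \<in> set rs"
    using traced_collect[of "length gs" "\<lambda>l. gs ! l" "\<lambda>_. xs" "\<lambda>l. ys ! l"] assms(1)
    by (auto simp: list_all2_conv_all_nth)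
  obtain ss where ss: "valid_trace ss" "triple_encode (recf_code f) (list_encode ys) v \<in> set ss"
    using assms(2) unfolding traced_def by blast
  have "justified (Bex (set (rs @ ss))) (triple_encode (recf_code (Comp f gs)) (list_encode xs) v)"
    unfolding justified_Comp using rs(2) ss(2) list_all2_lengthD[OF assms(1)]
    by (intro bexI[of _ "triple_encode (recf_code f) (list_encode ys) v"]) simp_all
  then show ?thesis using tracedI valid_trace_append[OF rs(1) ss(1)] by blast
qed

lemma traced_PrimRec_0:
  assumes "traced f xs v"
  shows "traced (PrimRec f g) (0 # xs) v"
proof -
  obtain rs where "valid_trace rs" "triple_encode (recf_code f) (list_encode xs) v \<in> set rs"
    using assms unfolding traced_def by blast
  then show ?thesis by (intro tracedI) (simp_all add: justified_PrimRec)
qed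

lemma traced_PrimRec_Suc:
  assumes "traced (PrimRec f g) (y # xs) r" "traced g (y # r # xs) v"
  shows "traced (PrimRec f g) (Suc y # xs) v"
proof -
  obtain rs where rs: "valid_trace rs" "triple_encode (recf_code (PrimRec f g)) (list_encode (y # xs)) r \<in> set rs"
    using assms(1) unfolding traced_def by blast
  obtain ss where ss: "valid_trace ss" "triple_encode (recf_code g) (list_encode (y # r # xs)) v \<in> set ss"
    using assms(2) unfolding traced_def by blast
  have "justified (Bex (set (rs @ ss))) (triple_encode (recf_code (PrimRec f g)) (list_encode (Suc y # xs)) v)"
    unfolding justified_PrimRec using rs(2) ss(2)
    by (simp, intro bexI[of _ "triple_encode (recf_code (PrimRec f g)) (list_encode (y # xs)) r"]) simp_all
  then show ?thesis using tracedI valid_trace_append[OF rs(1) ss(1)] by blast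
qed

lemma traced_Mu:
  assumes "traced f (y # xs) 0" "\<And>z. z < y \<Longrightarrow> \<exists>w>0. traced f (z # xs) w"
  shows "traced (Mu f) xs y"
proof -
  obtain rs where rs: "valid_trace rs" "triple_encode (recf_code f) (list_encode (y # xs)) 0 \<in> set rs"
    using assms(1) unfolding traced_def by blast
  have "\<forall>z\<in>{..<y}. \<exists>w. 0 < w \<and> traced f (z # xs) w" using assms(2) by simp
  then obtain w where w: "\<forall>z\<in>{..<y}. 0 < w z \<and> traced f (z # xs) (w z)"
    by (rule bchoice[elim_format]) blast
  then have "\<exists>ss. valid_trace ss \<and> (\<forall>z<y. triple_encode (recf_code f) (list_encode (z # xs)) (w z) \<in> set ss)"
    by (intro traced_collect) simp
  then obtain ss where ss: "valid_trace ss" "\<forall>z<y. triple_encode (recf_code f) (list_encode (z # xs)) (w z) \<in> set ss"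
    by blast
  have "justified (Bex (set (rs @ ss))) (triple_encode (recf_code (Mu f)) (list_encode xs) y)"
    unfolding justified_Mu
  proof (intro conjI allI impI)
    show "\<exists>r'\<in>set (rs @ ss). r' = triple_encode (recf_code f) (list_cons y (list_encode xs)) 0"
      using rs(2) by simp
    fix z assume "z < y"
    then show "\<exists>r'\<in>set (rs @ ss). triple_fst r' = recf_code f \<and> triple_snd r' = list_cons z (list_encode xs) \<and> 0 < triple_thd r'"
      using ss(2) w by (intro bexI[of _ "triple_encode (recf_code f) (list_encode (z # xs)) (w z)"]) auto
  qed
  then show ?thesis using tracedI valid_trace_append[OF rs(1) ss(1)] by blast
qed

lemma eval_imp_traced: "eval t xs v \<Longrightarrow> traced t xs v"
proof (induction rule: eval.induct)
  case (eval_Zero xs)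
  show ?case by (rule tracedI[OF valid_trace_Nil]) (simp only: justified_Zero)
next
  case (eval_Succ x xs)
  show ?case by (rule tracedI[OF valid_trace_Nil]) (simp only: justified_Succ, simp)
next
  case (eval_Proj i xs)
  show ?case by (rule tracedI[OF valid_trace_Nil]) (simp only: justified_Proj, use eval_Proj in simp)
next
  case (eval_Comp xs gs ys f v)
  have "list_all2 (\<lambda>g w. traced g xs w) gs ys" using eval_Comp.IH(1) by (rule list_all2_mono) simp
  then show ?case using eval_Comp.IH(2) by (rule traced_Comp)
next
  case (eval_PR0 f xs v g)
  show ?case by (rule traced_PrimRec_0[OF eval_PR0.IH])
next
  case (eval_PRS f g y xs r v)
  then show ?case by (intro traced_PrimRec_Suc)
next
  case (eval_Mu f y xs)
  then show ?case by (intro traced_Mu) auto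
qed

definition valid_trace_code :: "nat \<Rightarrow> bool" where
  "valid_trace_code L \<longleftrightarrow> (\<forall>i<list_length L. justified (\<lambda>P. \<exists>j<i. P (list_nth L j)) (list_nth L i))"

lemma bex_set_take_conv_nth:
  assumes "i \<le> length xs"
  shows "(\<exists>x\<in>set (take i xs). P x) \<longleftrightarrow> (\<exists>j<i. P (xs ! j))"
proof -
  have "(\<exists>x\<in>set (take i xs). P x) \<longleftrightarrow> (\<exists>j<length (take i xs). P (take i xs ! j))"
    unfolding set_conv_nth by blast
  then show ?thesis using assms by auto
qed

lemma valid_trace_code_iff: "valid_trace_code L \<longleftrightarrow> valid_trace (list_decode L)"
proof -
  have "(\<lambda>P. \<exists>j<i. P (list_nth L j)) = Bex (set (take i (list_decode L)))" if "i < length (list_decode L)" for i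
  proof -
    have "list_nth L j = list_decode L ! j" if "j < i" for j
      using that \<open>i < length (list_decode L)\<close> by (simp add: list_nth_eq)
    then show ?thesis using that by (auto simp: bex_set_take_conv_nth fun_eq_iff)
  qed
  then show ?thesis
    unfolding valid_trace_code_def valid_trace_def list_length_eq by (simp add: list_nth_eq)
qed

lemma decidable_fn_valid_trace_code:
  assumes "computable_fn n g"
  shows "decidable_fn n (\<lambda>e. valid_trace_code (g e))"
proof -
  have "decidable_fn 1 (\<lambda>e. valid_trace_code (e 0))"
    unfolding valid_trace_code_def justified_def Let_def by (intro computable_fn_coding_intros) simp_all
  then show ?thesis
    using assms unfolding decidable_fn_def by (rule computable_fn_compose1[where F = "\<lambda>L. if valid_trace_code L then 1 else 0"])
qed

text \<open>\<open>self_trace n L\<close>: L is a halting certificate for program n run on its own code.\<close>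

definition trace_last :: "nat \<Rightarrow> nat" where "trace_last L = list_nth L (list_length L - 1)"

definition self_trace :: "nat \<Rightarrow> nat \<Rightarrow> bool" where
  "self_trace n L \<longleftrightarrow> valid_trace_code L \<and> L \<noteq> 0 \<and>
    triple_fst (trace_last L) = n \<and> triple_snd (trace_last L) = list_cons n 0"

lemma decidable_fn_self_trace:
  "computable_fn n f \<Longrightarrow> computable_fn n g \<Longrightarrow> decidable_fn n (\<lambda>e. self_trace (f e) (g e))"
  unfolding self_trace_def trace_last_def
  by (intro computable_fn_coding_intros decidable_fn_valid_trace_code)

lemma self_trace_sound:
  assumes "self_trace (recf_code t) L"
  shows "eval t [recf_code t] (triple_thd (trace_last L))"
proof -
  have "valid_trace (list_decode L)" and "list_decode L \<noteq> []"
    using assms by (simp_all add: self_trace_def valid_trace_code_iff list_decode_eq_Nil_iff)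
  moreover have "trace_last L = last (list_decode L)"
    using \<open>list_decode L \<noteq> []\<close> by (simp add: trace_last_def list_length_eq list_nth_eq last_conv_nth)
  ultimately have "triple_encode (recf_code t) (list_cons (recf_code t) 0) (triple_thd (trace_last L)) \<in> set (list_decode L)"
    using assms triple_encode_triple_sel[of "trace_last L"] by (simp add: self_trace_def)
  then show ?thesis
    using valid_trace_sound[OF \<open>valid_trace (list_decode L)\<close>] by fastforce
qed

lemma self_trace_complete:
  assumes "eval t [recf_code t] v"
  shows "\<exists>L. self_trace (recf_code t) L \<and> triple_thd (trace_last L) = v"
proof -
  let ?r = "triple_encode (recf_code t) (list_encode [recf_code t]) v"
  obtain rs where rs: "valid_trace rs" "?r \<in> set rs" using eval_imp_traced[OF assms] unfolding traced_def by blast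
  then have "valid_trace (rs @ [?r])" by (intro valid_trace_snoc valid_trace_justified)
  then have "self_trace (recf_code t) (list_encode (rs @ [?r]))"
    by (simp add: self_trace_def valid_trace_code_iff trace_last_def nth_append)
  moreover have "triple_thd (trace_last (list_encode (rs @ [?r]))) = v"
    by (simp add: trace_last_def nth_append)
  ultimately show ?thesis by blast
qed

inductive_cases eval_CompE: "eval (Comp f gs) xs v"
inductive_cases eval_PrimRec_SucE: "eval (PrimRec f g) (Suc y # xs) v"
inductive_cases eval_MuE: "eval (Mu f) xs v"

lemma eval_deterministic: "eval t xs v \<Longrightarrow> eval t xs v' \<Longrightarrow> v = v'"
proof (induction arbitrary: v' rule: eval.induct)
  case (eval_Zero xs)
  from eval_Zero.prems show ?case by (cases rule: eval.cases) auto
next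
  case (eval_Succ x xs)
  from eval_Succ.prems show ?case by (cases rule: eval.cases) auto
next
  case (eval_Proj i xs)
  from eval_Proj.prems show ?case by (cases rule: eval.cases) auto
next
  case (eval_Comp xs gs ys f v)
  from eval_Comp.prems obtain ys' where ys': "list_all2 (\<lambda>g v. eval g xs v) gs ys'" "eval f ys' v'"
    by (rule eval_CompE)
  have "ys = ys'"
    using eval_Comp.IH(1) ys'(1) by (auto simp: list_all2_conv_all_nth intro: nth_equalityI)
  then show ?case using eval_Comp.IH(2) ys'(2) by blast
next
  case (eval_PR0 f xs v g)
  from eval_PR0.prems show ?case by (cases rule: eval.cases) (auto dest: eval_PR0.IH)
next
  case (eval_PRS f g y xs r v)
  from eval_PRS.prems obtain r' where "eval (PrimRec f g) (y # xs) r'" "eval g (y # r' # xs) v'"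
    by (rule eval_PrimRec_SucE)
  then show ?case using eval_PRS.IH by metis
next
  case (eval_Mu f y xs)
  from eval_Mu.prems have v': "eval f (v' # xs) 0" "\<And>z. z < v' \<Longrightarrow> \<exists>w>0. eval f (z # xs) w"
    by (auto elim: eval_MuE)
  show ?case
  proof (rule linorder_cases[of y v'])
    assume "y < v'"
    then show ?thesis using v'(2) eval_Mu.IH(1) by fastforce
  next
    assume "v' < y"
    then show ?thesis using v'(1) eval_Mu.IH(2) by fastforce
  qed
qed

definition self_halts :: "nat \<Rightarrow> bool" where
  "self_halts n \<longleftrightarrow> (\<exists>L. self_trace n L)"

definition self_value :: "nat \<Rightarrow> nat" where
  "self_value n = triple_thd (trace_last (LEAST L. self_trace n L))"

lemma computable1_self_value:
  assumes "computable1 h"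
  shows "\<exists>n. self_halts n \<and> self_value n = h n"
proof -
  obtain t where t: "\<And>n. eval t [n] (h n)" using assms unfolding computable1_def by blast
  then obtain L where "self_trace (recf_code t) L" using self_trace_complete by blast
  then have halts: "self_halts (recf_code t)"
    and "self_trace (recf_code t) (LEAST L. self_trace (recf_code t) L)"
    unfolding self_halts_def by (auto intro: LeastI)
  then have "eval t [recf_code t] (self_value (recf_code t))"
    unfolding self_value_def by (intro self_trace_sound)
  then show ?thesis using t eval_deterministic halts by blast
qed

text \<open>Counting the \<open>j \<le> k\<close> below the least certificate computes it once it is at most k.\<close>

definition least_self_trace_upto :: "nat \<Rightarrow> nat \<Rightarrow> nat" where
  "least_self_trace_upto n k = (\<Sum>j<Suc k. if \<exists>L<Suc j. self_trace n L then 0 else 1)"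

lemma least_self_trace_upto_eq:
  assumes "self_trace n L" "L \<le> k"
  shows "least_self_trace_upto n k = (LEAST L. self_trace n L)"
proof -
  define m where "m = (LEAST L. self_trace n L)"
  have "self_trace n m" "m \<le> k" using assms unfolding m_def by (auto intro: LeastI Least_le le_trans)
  have "(\<exists>L<Suc j. self_trace n L) \<longleftrightarrow> m \<le> j" for j
    using \<open>self_trace n m\<close> unfolding m_def by (metis Least_le less_Suc_eq_le order_trans)
  then have "least_self_trace_upto n k = (\<Sum>j<Suc k. if j < m then 1 else 0)"
    unfolding least_self_trace_upto_def by (intro sum.cong) auto
  also have "\<dots> = m"
    using \<open>m \<le> k\<close> by (induction k) (auto simp: le_Suc_eq)
  finally show ?thesis unfolding m_def .
qed

lemma computable_fn_least_self_trace_upto: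
  assumes "computable_fn n f" "computable_fn n g"
  shows "computable_fn n (\<lambda>e. least_self_trace_upto (f e) (g e))"
proof (rule computable_fn_compose2[OF _ assms])
  show "computable_fn 2 (\<lambda>e. least_self_trace_upto (e 0) (e 1))"
    unfolding least_self_trace_upto_def by (intro computable_fn_intros decidable_fn_self_trace) simp_all
qed

section \<open>Coded rationals and computable reals\<close>

definition rat_decode :: "nat \<Rightarrow> real" where
  "rat_decode z = rat_code (triple_fst z) (triple_snd z) (triple_thd z)"

lemma rat_decode_triple_encode: "rat_decode (triple_encode a b c) = (real a - real b) / (real c + 1)"
  by (simp add: rat_decode_def rat_code_def)

lemma rat_decode_eq: "rat_decode z = (real (triple_fst z) - real (triple_snd z)) / (real (triple_thd z) + 1)"
  by (simp add: rat_decode_def rat_code_def)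

definition rat_add_enc :: "nat \<Rightarrow> nat \<Rightarrow> nat" where
  "rat_add_enc z w = triple_encode
     (triple_fst z * (triple_thd w + 1) + triple_fst w * (triple_thd z + 1))
     (triple_snd z * (triple_thd w + 1) + triple_snd w * (triple_thd z + 1))
     ((triple_thd z + 1) * (triple_thd w + 1) - 1)"

definition rat_neg_enc :: "nat \<Rightarrow> nat" where
  "rat_neg_enc z = triple_encode (triple_snd z) (triple_fst z) (triple_thd z)"

definition rat_mult_enc :: "nat \<Rightarrow> nat \<Rightarrow> nat" where
  "rat_mult_enc z w = triple_encode
     (triple_fst z * triple_fst w + triple_snd z * triple_snd w)
     (triple_fst z * triple_snd w + triple_snd z * triple_fst w)
     ((triple_thd z + 1) * (triple_thd w + 1) - 1)"

text \<open>Division is only needed, and only correct, for a positive divisor.\<close>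

definition rat_div_enc :: "nat \<Rightarrow> nat \<Rightarrow> nat" where
  "rat_div_enc z w = triple_encode
     (triple_fst z * (triple_thd w + 1)) (triple_snd z * (triple_thd w + 1))
     ((triple_thd z + 1) * (triple_fst w - triple_snd w) - 1)"

definition rat_min_enc :: "nat \<Rightarrow> nat \<Rightarrow> nat" where
  "rat_min_enc z w =
     (if triple_fst z * (triple_thd w + 1) + triple_snd w * (triple_thd z + 1)
         \<le> triple_fst w * (triple_thd z + 1) + triple_snd z * (triple_thd w + 1) then z else w)"

definition dyadic_enc :: "bool \<Rightarrow> nat \<Rightarrow> nat" where
  "dyadic_enc s k = triple_encode (if s then 1 else 0) (if s then 0 else 1) (2 ^ k - 1)"

lemma of_nat_mult_Suc_minus_1: "real ((a + 1) * (b + 1) - 1) + 1 = (real a + 1) * (real b + 1)"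
  by (simp add: of_nat_diff algebra_simps)

lemma rat_decode_add_enc: "rat_decode (rat_add_enc z w) = rat_decode z + rat_decode w"
  unfolding rat_add_enc_def rat_decode_triple_encode of_nat_mult_Suc_minus_1 rat_decode_eq
  by (simp add: field_simps)

lemma rat_decode_neg_enc: "rat_decode (rat_neg_enc z) = - rat_decode z"
  unfolding rat_neg_enc_def rat_decode_triple_encode rat_decode_eq by (simp add: field_simps)

lemma rat_decode_mult_enc: "rat_decode (rat_mult_enc z w) = rat_decode z * rat_decode w"
  unfolding rat_mult_enc_def rat_decode_triple_encode of_nat_mult_Suc_minus_1 rat_decode_eq
  by (simp add: field_simps)

lemma rat_decode_pos_iff: "0 < rat_decode w \<longleftrightarrow> triple_snd w < triple_fst w"
  unfolding rat_decode_eq by (simp add: zero_less_divide_iff add_pos_nonneg)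

lemma rat_decode_div_enc:
  assumes "0 < rat_decode w"
  shows "rat_decode (rat_div_enc z w) = rat_decode z / rat_decode w"
proof -
  have lt: "triple_snd w < triple_fst w" using assms by (simp add: rat_decode_pos_iff)
  moreover have "1 \<le> (triple_thd z + 1) * (triple_fst w - triple_snd w)" using lt by simp
  ultimately have "real ((triple_thd z + 1) * (triple_fst w - triple_snd w) - 1) + 1
      = (real (triple_thd z) + 1) * (real (triple_fst w) - real (triple_snd w))"
    by (simp add: of_nat_diff algebra_simps)
  then show ?thesis
    using lt unfolding rat_div_enc_def rat_decode_triple_encode rat_decode_eq by (simp add: field_simps)
qed

lemma rat_decode_min_enc: "rat_decode (rat_min_enc z w) = min (rat_decode z) (rat_decode w)"
proof -
  have "rat_decode z \<le> rat_decode w \<longleftrightarrow>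
      (real (triple_fst z) - real (triple_snd z)) * (real (triple_thd w) + 1)
        \<le> (real (triple_fst w) - real (triple_snd w)) * (real (triple_thd z) + 1)"
    unfolding rat_decode_eq by (simp add: divide_le_eq le_divide_eq field_simps add_pos_nonneg)
  also have "\<dots> \<longleftrightarrow> triple_fst z * (triple_thd w + 1) + triple_snd w * (triple_thd z + 1)
      \<le> triple_fst w * (triple_thd z + 1) + triple_snd z * (triple_thd w + 1)"
  proof -
    have "(real (triple_fst z) - real (triple_snd z)) * (real (triple_thd w) + 1)
        \<le> (real (triple_fst w) - real (triple_snd w)) * (real (triple_thd z) + 1) \<longleftrightarrow>
      real (triple_fst z * (triple_thd w + 1) + triple_snd w * (triple_thd z + 1))
        \<le> real (triple_fst w * (triple_thd z + 1) + triple_snd z * (triple_thd w + 1))"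
      by (simp add: algebra_simps)
    then show ?thesis by linarith
  qed
  finally show ?thesis unfolding rat_min_enc_def by (auto simp: min_def)
qed

lemma rat_decode_dyadic_enc: "rat_decode (dyadic_enc s k) = (if s then 1 else -1) / 2 ^ k"
proof -
  have "real (2 ^ k - 1 :: nat) + 1 = 2 ^ k" by (simp add: of_nat_diff)
  then show ?thesis unfolding dyadic_enc_def rat_decode_triple_encode by simp
qed

lemma computable_fn_power2:
  assumes "computable_fn n g"
  shows "computable_fn n (\<lambda>e. 2 ^ g e)"
proof (rule computable_fn_compose1[OF _ assms])
  have "computable_fn (Suc 0) (\<lambda>e. prim_rec_env (\<lambda>e. 1) (\<lambda>e. e 1 + e 1) (e 0) (\<lambda>i. e (Suc i)))"
    by (rule computable_fn_prim_rec) (auto intro!: computable_fn_intros)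
  moreover have "prim_rec_env (\<lambda>e. 1) (\<lambda>e. e 1 + e 1) y e = 2 ^ y" for y e
    by (induction y) (auto simp: env_cons_def)
  ultimately show "computable_fn 1 (\<lambda>e. 2 ^ e 0)" by simp
qed

lemma computable_fn_rat_add_enc:
  "computable_fn n f \<Longrightarrow> computable_fn n g \<Longrightarrow> computable_fn n (\<lambda>e. rat_add_enc (f e) (g e))"
  unfolding rat_add_enc_def by (intro computable_fn_coding_intros)

lemma computable_fn_rat_neg_enc: "computable_fn n f \<Longrightarrow> computable_fn n (\<lambda>e. rat_neg_enc (f e))"
  unfolding rat_neg_enc_def by (intro computable_fn_coding_intros)

lemma computable_fn_rat_mult_enc:
  "computable_fn n f \<Longrightarrow> computable_fn n g \<Longrightarrow> computable_fn n (\<lambda>e. rat_mult_enc (f e) (g e))"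
  unfolding rat_mult_enc_def by (intro computable_fn_coding_intros)

lemma computable_fn_rat_div_enc:
  "computable_fn n f \<Longrightarrow> computable_fn n g \<Longrightarrow> computable_fn n (\<lambda>e. rat_div_enc (f e) (g e))"
  unfolding rat_div_enc_def by (intro computable_fn_coding_intros)

lemma computable_fn_rat_min_enc:
  "computable_fn n f \<Longrightarrow> computable_fn n g \<Longrightarrow> computable_fn n (\<lambda>e. rat_min_enc (f e) (g e))"
  unfolding rat_min_enc_def by (intro computable_fn_coding_intros)

lemma computable_fn_dyadic_enc:
  "decidable_fn n P \<Longrightarrow> computable_fn n g \<Longrightarrow> computable_fn n (\<lambda>e. dyadic_enc (P e) (g e))"
  unfolding dyadic_enc_def by (intro computable_fn_coding_intros computable_fn_power2)

lemmas computable_fn_rat_intros = computable_fn_coding_intros computable_fn_rat_add_enc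
  computable_fn_rat_neg_enc computable_fn_rat_mult_enc computable_fn_rat_div_enc
  computable_fn_rat_min_enc computable_fn_dyadic_enc

lemma computable_real_seqI:
  assumes "computable_fn 2 (\<lambda>e. q (e 0) (e 1))" and "\<And>n k. \<bar>rat_decode (q n k) - x n\<bar> \<le> 1 / 2 ^ k"
  shows "computable_real_seq x"
  unfolding computable_real_seq_def
proof (intro exI conjI allI impI)
  show "computable2 (\<lambda>n k. triple_fst (q n k))" "computable2 (\<lambda>n k. triple_snd (q n k))"
    "computable2 (\<lambda>n k. triple_thd (q n k))" "computable2 (\<lambda>n N. N)"
    unfolding computable2_iff using assms(1) by (auto intro!: computable_fn_rat_intros simp: numeral_2_eq_2)
  fix n N k :: nat assume "N \<le> k"
  then have "1 / 2 ^ k \<le> (1::real) / 2 ^ N" by (simp add: frac_le power_increasing)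
  then show "\<bar>rat_code (triple_fst (q n k)) (triple_snd (q n k)) (triple_thd (q n k)) - x n\<bar> \<le> 1 / 2 ^ N"
    using assms(2)[of n k] unfolding rat_decode_def by linarith
qed

lemma computable_real_seq_nth:
  assumes "computable_real_seq x"
  shows "computable_real (x n)"
proof -
  obtain a b c e where abce: "computable2 a" "computable2 b" "computable2 c" "computable2 e"
    and approx: "\<forall>n N k. e n N \<le> k \<longrightarrow> \<bar>rat_code (a n k) (b n k) (c n k) - x n\<bar> \<le> 1 / 2 ^ N"
    using assms unfolding computable_real_seq_def by blast
  have "computable1 (f n)" if "computable2 f" for f
    using that unfolding computable1_iff computable2_iff
    by (rule computable_fn_compose2[OF _ computable_fn_const computable_fn_proj]) simp
  then show ?thesis unfolding computable_real_def using abce approx by blast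
qed

lemma computable_real_approx:
  assumes "computable_real x"
  obtains q where "computable_fn 1 (\<lambda>e. q (e 0))" and "\<And>m. \<bar>rat_decode (q m) - x\<bar> \<le> 1 / 2 ^ m"
proof -
  obtain a b c e where abce: "computable1 a" "computable1 b" "computable1 c" "computable1 e"
    and approx: "\<forall>N k. e N \<le> k \<longrightarrow> \<bar>rat_code (a k) (b k) (c k) - x\<bar> \<le> 1 / 2 ^ N"
    using assms unfolding computable_real_def by blast
  let ?q = "\<lambda>m. triple_encode (a (e m)) (b (e m)) (c (e m))"
  have E: "computable_fn 1 (\<lambda>z. e (z 0))" using abce(4) unfolding computable1_iff .
  have "computable_fn 1 (\<lambda>z. ?q (z 0))"
    using abce(1-3) unfolding computable1_iff
    by (intro computable_fn_triple_encode computable_fn_compose1[OF _ E])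
  moreover have "\<bar>rat_decode (?q m) - x\<bar> \<le> 1 / 2 ^ m" for m
    using approx by (simp add: rat_decode_def)
  ultimately show ?thesis by (rule that)
qed

section \<open>The diagonal signal\<close>

lemma rat_code_gt_half_iff: "rat_code a b c > 1 / 2 \<longleftrightarrow> 2 * a > 2 * b + c + 1"
proof -
  have "rat_code a b c > 1 / 2 \<longleftrightarrow> 2 * (real a - real b) > real c + 1"
    unfolding rat_code_def by (simp add: field_simps add_pos_nonneg)
  also have "\<dots> \<longleftrightarrow> real (2 * a) > real (2 * b + c + 1)" by simp linarith
  finally show ?thesis by (simp only: of_nat_less_iff)
qed

text \<open>Rounding r to 0 or 1 would give a total computable function differing from every
  program on that program's own code.\<close>

theorem computable_real_seq_misses_self_value:
  assumes "computable_real_seq r"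
  shows "\<exists>n. self_halts n \<and> r n \<noteq> (if self_value n = 0 then 0 else 1)"
proof (rule ccontr)
  assume "\<not> ?thesis"
  then have r: "r n = (if self_value n = 0 then 0 else 1)" if "self_halts n" for n
    using that by blast
  obtain a b c e where abce: "computable2 a" "computable2 b" "computable2 c" "computable2 e"
    and approx: "\<And>n N k. e n N \<le> k \<Longrightarrow> \<bar>rat_code (a n k) (b n k) (c n k) - r n\<bar> \<le> 1 / 2 ^ N"
    using assms unfolding computable_real_seq_def by blast
  define h where "h n = (if 2 * a n (e n 2) > 2 * b n (e n 2) + c n (e n 2) + 1 then 0 else 1::nat)" for n
  have "computable1 h"
  proof -
    have E: "computable_fn 1 (\<lambda>z. e (z 0) 2)"
      using abce(4) unfolding computable2_iff
      by (rule computable_fn_compose2[OF _ computable_fn_proj computable_fn_const]) simp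
    have "computable_fn 1 (\<lambda>z. f (z 0) (e (z 0) 2))" if "computable2 f" for f
      using that unfolding computable2_iff by (rule computable_fn_compose2[OF _ computable_fn_proj E]) simp
    then show ?thesis
      unfolding computable1_iff h_def using abce(1-3) by (intro computable_fn_intros) auto
  qed
  then obtain m where m: "self_halts m" "self_value m = h m" using computable1_self_value by blast
  define q where "q = rat_code (a m (e m 2)) (b m (e m 2)) (c m (e m 2))"
  have close: "\<bar>q - r m\<bar> \<le> 1 / 4" using approx[of m 2 "e m 2"] unfolding q_def by simp
  have h: "h m = (if q > 1 / 2 then 0 else 1)" unfolding h_def q_def rat_code_gt_half_iff by simp
  show False
  proof (cases "h m = 0")
    case True
    then have "r m = 0" using r m by simp
    then show False using True close h by (simp split: if_splits)
  next
    case False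
    then have "r m = 1" using r m by simp
    then show False using False close h by (simp add: abs_le_iff split: if_splits)
  qed
qed

definition diagonal_signal :: "nat \<Rightarrow> nat \<Rightarrow> real" where
  "diagonal_signal c n =
    (if self_halts n then (if self_value n = 0 then 1 else -1) / 2 ^ ((LEAST L. self_trace n L) + c) else 0)"

lemma diagonal_signal_pos: "self_halts n \<Longrightarrow> self_value n = 0 \<Longrightarrow> diagonal_signal c n > 0"
  by (simp add: diagonal_signal_def)

lemma diagonal_signal_neg: "self_halts n \<Longrightarrow> self_value n \<noteq> 0 \<Longrightarrow> diagonal_signal c n < 0"
  by (simp add: diagonal_signal_def)

lemma abs_diagonal_signal_le: "\<bar>diagonal_signal c n\<bar> \<le> 1 / 2 ^ c"
proof -
  have "(1::real) / 2 ^ ((LEAST L. self_trace n L) + c) \<le> 1 / 2 ^ c"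
    by (intro divide_left_mono power_increasing) auto
  then show ?thesis unfolding diagonal_signal_def by auto
qed

text \<open>Searching for a certificate among the first k + 1 candidates: once the least one is found
  the value is exact, and otherwise the signal is smaller than \<open>2 ^ -(k + 1)\<close>.\<close>

definition diagonal_signal_enc :: "nat \<Rightarrow> nat \<Rightarrow> nat \<Rightarrow> nat" where
  "diagonal_signal_enc c n k =
    (if \<exists>L<Suc k. self_trace n L
     then dyadic_enc (triple_thd (trace_last (least_self_trace_upto n k)) = 0) (least_self_trace_upto n k + c)
     else triple_encode 0 0 0)"

lemma computable_fn_diagonal_signal_enc:
  assumes "computable_fn n f" "computable_fn n g"
  shows "computable_fn n (\<lambda>e. diagonal_signal_enc c (f e) (g e))"
proof (rule computable_fn_compose2[OF _ assms])
  show "computable_fn 2 (\<lambda>e. diagonal_signal_enc c (e 0) (e 1))"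
    unfolding diagonal_signal_enc_def trace_last_def
    by (intro computable_fn_rat_intros decidable_fn_self_trace computable_fn_least_self_trace_upto) simp_all
qed

lemma diagonal_signal_enc_approx: "\<bar>rat_decode (diagonal_signal_enc c n k) - diagonal_signal c n\<bar> \<le> 1 / 2 ^ (k + 1)"
proof (cases "\<exists>L<Suc k. self_trace n L")
  case True
  then have "least_self_trace_upto n k = (LEAST L. self_trace n L)" and "self_halts n"
    using least_self_trace_upto_eq unfolding self_halts_def by auto
  then show ?thesis
    using True unfolding diagonal_signal_enc_def diagonal_signal_def self_value_def
    by (simp add: rat_decode_dyadic_enc)
next
  case False
  have "\<bar>diagonal_signal c n\<bar> \<le> 1 / 2 ^ (k + 1)"
  proof (cases "self_halts n")
    case True
    then have "self_trace n (LEAST L. self_trace n L)" unfolding self_halts_def by (auto intro: LeastI)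
    then have "k + 1 \<le> (LEAST L. self_trace n L)" using False by (metis Suc_eq_plus1 not_less_eq_eq not_le)
    then have "(1::real) / 2 ^ ((LEAST L. self_trace n L) + c) \<le> 1 / 2 ^ (k + 1)"
      by (intro divide_left_mono power_increasing) auto
    then show ?thesis using True unfolding diagonal_signal_def by auto
  qed (simp add: diagonal_signal_def)
  moreover have "diagonal_signal_enc c n k = triple_encode 0 0 0"
    using False unfolding diagonal_signal_enc_def by (rule if_not_P)
  ultimately show ?thesis by (simp add: rat_decode_triple_encode)
qed

section \<open>Optimal test channels at the zero-rate distortion level\<close>

definition output_prob :: "(bool \<Rightarrow> real) \<Rightarrow> (bool \<Rightarrow> bool \<Rightarrow> real) \<Rightarrow> bool \<Rightarrow> real" where
  "output_prob P W y = (\<Sum>x\<in>UNIV. P x * W x y)"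

definition mutual_info_term :: "(bool \<Rightarrow> real) \<Rightarrow> (bool \<Rightarrow> bool \<Rightarrow> real) \<Rightarrow> bool \<Rightarrow> bool \<Rightarrow> real" where
  "mutual_info_term P W x y =
    (if P x * W x y = 0 then 0 else P x * W x y * ln (W x y / output_prob P W y))"

lemma mutual_info_eq_sum: "mutual_info P W = (\<Sum>x\<in>UNIV. \<Sum>y\<in>UNIV. mutual_info_term P W x y)"
  unfolding mutual_info_def mutual_info_term_def output_prob_def ..

lemma output_prob_ge: "is_dist P \<Longrightarrow> is_channel W \<Longrightarrow> P x * W x y \<le> output_prob P W y"
  unfolding output_prob_def is_dist_def is_channel_def UNIV_bool by (cases x) auto

text \<open>The termwise form of \<open>ln t \<le> t - 1\<close> behind the nonnegativity of mutual information.\<close>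

lemma mutual_info_term_ge:
  assumes "is_dist P" "is_channel W"
  shows "mutual_info_term P W x y \<ge> P x * W x y - P x * output_prob P W y"
proof -
  have P0: "P x \<ge> 0" and W0: "W x y \<ge> 0" using assms unfolding is_dist_def is_channel_def by auto
  have Q: "P x * W x y \<le> output_prob P W y" by (rule output_prob_ge[OF assms])
  show ?thesis
  proof (cases "P x * W x y = 0")
    case True
    then show ?thesis using P0 W0 Q
      unfolding mutual_info_term_def by (simp del: mult_eq_0_iff)
  next
    case False
    then have Pp: "P x > 0" and Wp: "W x y > 0" using P0 W0 by (auto simp: less_le)
    have Qp: "output_prob P W y > 0" using Q Pp Wp by (meson mult_pos_pos less_le_trans)
    have "ln (output_prob P W y / W x y) \<le> output_prob P W y / W x y - 1"
      using Qp Wp by (intro ln_le_minus_one) simp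
    then have "ln (W x y / output_prob P W y) \<ge> 1 - output_prob P W y / W x y"
      using Qp Wp by (simp add: ln_div)
    then have "P x * W x y * ln (W x y / output_prob P W y) \<ge> P x * W x y * (1 - output_prob P W y / W x y)"
      using Pp Wp by (intro mult_left_mono) auto
    also have "P x * W x y * (1 - output_prob P W y / W x y) = P x * W x y - P x * output_prob P W y"
      using Wp by (simp add: field_simps)
    finally show ?thesis using False unfolding mutual_info_term_def by simp
  qed
qed

lemma sum_mutual_info_lower_bound:
  assumes "is_dist P" "is_channel W"
  shows "(\<Sum>x\<in>UNIV. \<Sum>y\<in>UNIV. P x * W x y - P x * output_prob P W y) = 0"
proof -
  have "P False + P True = 1" "W False False + W False True = 1" "W True False + W True True = 1"
    using assms unfolding is_dist_def is_channel_def UNIV_bool by auto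
  then show ?thesis unfolding output_prob_def UNIV_bool by simp algebra
qed

lemma mutual_info_nonneg:
  assumes "is_dist P" "is_channel W"
  shows "mutual_info P W \<ge> 0"
proof -
  have "(\<Sum>x\<in>UNIV. \<Sum>y\<in>UNIV. P x * W x y - P x * output_prob P W y)
      \<le> (\<Sum>x\<in>UNIV. \<Sum>y\<in>UNIV. mutual_info_term P W x y)"
    by (intro sum_mono mutual_info_term_ge[OF assms])
  then show ?thesis using sum_mutual_info_lower_bound[OF assms] by (simp add: mutual_info_eq_sum)
qed

text \<open>Zero mutual information forces equality in \<open>ln t \<le> t - 1\<close> for every term, i.e. every row of
  the channel on the support of P is the output distribution.\<close>

lemma mutual_info_eq_0_imp_row_eq:
  assumes P: "is_dist P" and W: "is_channel W" and I0: "mutual_info P W = 0" and Px: "P x > 0"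
  shows "W x y = output_prob P W y"
proof -
  define slack where "slack x y = mutual_info_term P W x y - (P x * W x y - P x * output_prob P W y)" for x y
  have "slack x y \<ge> 0" for x y unfolding slack_def using mutual_info_term_ge[OF P W] by simp
  moreover have "(\<Sum>x\<in>UNIV. \<Sum>y\<in>UNIV. slack x y) = 0"
    unfolding slack_def using I0 sum_mutual_info_lower_bound[OF P W]
    by (simp add: sum_subtractf mutual_info_eq_sum)
  ultimately have "slack x y = 0" unfolding UNIV_bool by (cases x; cases y) (auto simp: add_nonneg_eq_0_iff)
  then have eq: "mutual_info_term P W x y = P x * W x y - P x * output_prob P W y" unfolding slack_def by simp
  show ?thesis
  proof (cases "W x y = 0")
    case True
    then show ?thesis using eq Px unfolding mutual_info_term_def by simp
  next
    case False
    then have Wp: "W x y > 0" using W unfolding is_channel_def is_dist_def by (simp add: less_le)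
    have Qp: "output_prob P W y > 0"
      using output_prob_ge[OF P W] Px Wp by (meson mult_pos_pos less_le_trans)
    have pw: "P x * W x y \<noteq> 0" using Px Wp by simp
    then have "P x * W x y * ln (W x y / output_prob P W y) = P x * W x y - P x * output_prob P W y"
      using eq unfolding mutual_info_term_def by simp
    then have "ln (W x y / output_prob P W y) = (P x * W x y - P x * output_prob P W y) / (P x * W x y)"
      using pw by (simp add: field_simps)
    also have "\<dots> = 1 - output_prob P W y / W x y" using Px Wp by (simp add: field_simps)
    finally have "ln (W x y / output_prob P W y) = 1 - output_prob P W y / W x y" .
    then have "ln (output_prob P W y / W x y) = output_prob P W y / W x y - 1"
      using Qp Wp by (simp add: ln_div)
    then have "output_prob P W y / W x y = 1" using Qp Wp by (intro ln_eq_minus_one) auto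
    then show ?thesis using Wp by simp
  qed
qed

definition const_channel :: "bool \<Rightarrow> bool \<Rightarrow> bool \<Rightarrow> real" where
  "const_channel c = (\<lambda>x y. if y = c then 1 else 0)"

lemma is_channel_const_channel: "is_channel (const_channel c)"
  unfolding is_channel_def is_dist_def const_channel_def UNIV_bool by auto

lemma mutual_info_const_channel:
  assumes "is_dist P"
  shows "mutual_info P (const_channel c) = 0"
proof -
  have "P False + P True = 1" using assms unfolding is_dist_def UNIV_bool by simp
  then have "output_prob P (const_channel c) y = const_channel c x y" for x y
    unfolding output_prob_def UNIV_bool const_channel_def by simp
  then have "mutual_info_term P (const_channel c) x y = 0" for x y
    unfolding mutual_info_term_def by simp
  then show ?thesis unfolding mutual_info_eq_sum by simp
qed

lemma rate_distortion_eq_0: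
  assumes "is_dist P" "is_channel W" "exp_distortion d P W \<le> D" "mutual_info P W = 0"
  shows "rate_distortion d D P = 0"
  unfolding rate_distortion_def
proof (rule cInf_eq_minimum)
  show "0 \<in> {mutual_info P W |W. is_channel W \<and> exp_distortion d P W \<le> D}" using assms by fastforce
  fix z assume "z \<in> {mutual_info P W |W. is_channel W \<and> exp_distortion d P W \<le> D}"
  then show "0 \<le> z" using mutual_info_nonneg[OF assms(1)] by blast
qed

lemma exp_distortion_bin_dist:
  "exp_distortion (bin_dist d01 d10) P W = P False * W False True * d01 + P True * W True False * d10"
  unfolding exp_distortion_def bin_dist_def UNIV_bool by simp

locale zero_rate_level =
  fixes d01 d10 :: real and P :: "bool \<Rightarrow> real" and D :: real
  assumes d01: "d01 > 0" and d10: "d10 > 0" and P: "is_dist P" "P False > 0" "P True > 0"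
    and D: "D = min (P True * d10) (P False * d01)"
begin

definition cheaper_output :: bool where "cheaper_output \<longleftrightarrow> P False * d01 \<le> P True * d10"

lemma const_channel_cheaper_output: "exp_distortion (bin_dist d01 d10) P (const_channel cheaper_output) \<le> D"
  unfolding exp_distortion_bin_dist D cheaper_output_def const_channel_def by (auto simp: min_def)

lemma rate_distortion_at_level: "rate_distortion (bin_dist d01 d10) D P = 0"
  by (rule rate_distortion_eq_0[OF P(1) is_channel_const_channel const_channel_cheaper_output
        mutual_info_const_channel[OF P(1)]])

lemma P_opt_nonempty: "P_opt (bin_dist d01 d10) D P \<noteq> {}"
  unfolding P_opt_def rate_distortion_at_level
  using is_channel_const_channel const_channel_cheaper_output mutual_info_const_channel[OF P(1)] by blast

lemma optimal_channel_distortion: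
  assumes "W \<in> P_opt (bin_dist d01 d10) D P"
  shows "P False * (1 - W False False) * d01 + P True * W False False * d10 \<le> D"
    and "0 \<le> W False False" "W False False \<le> 1"
proof -
  have W: "is_channel W" and dist: "exp_distortion (bin_dist d01 d10) P W \<le> D" and I0: "mutual_info P W = 0"
    using assms unfolding P_opt_def rate_distortion_at_level by auto
  have rows: "W True b = W False b" for b
    using mutual_info_eq_0_imp_row_eq[OF P(1) W I0 P(2)] mutual_info_eq_0_imp_row_eq[OF P(1) W I0 P(3)] by simp
  have "W False False + W False True = 1" "0 \<le> W False False" "0 \<le> W False True"
    using W unfolding is_channel_def is_dist_def UNIV_bool by auto
  then have FT: "W False True = 1 - W False False" and "0 \<le> W False False" "W False False \<le> 1" by linarith+
  moreover have "exp_distortion (bin_dist d01 d10) P W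
      = P False * (1 - W False False) * d01 + P True * W False False * d10"
    unfolding exp_distortion_bin_dist rows FT ..
  ultimately show "P False * (1 - W False False) * d01 + P True * W False False * d10 \<le> D"
    and "0 \<le> W False False" "W False False \<le> 1"
    using dist by simp_all
qed

lemma optimal_channel_False_False_eq_0:
  assumes "W \<in> P_opt (bin_dist d01 d10) D P" "P False * d01 < P True * d10"
  shows "W False False = 0"
proof -
  have "W False False * (P True * d10 - P False * d01) \<le> 0"
    using optimal_channel_distortion(1)[OF assms(1)] assms(2) D by (simp add: algebra_simps)
  then show ?thesis
    using optimal_channel_distortion(2)[OF assms(1)] assms(2) by (simp add: mult_le_0_iff)
qed

lemma optimal_channel_False_False_eq_1:
  assumes "W \<in> P_opt (bin_dist d01 d10) D P" "P True * d10 < P False * d01"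
  shows "W False False = 1"
proof -
  have "(1 - W False False) * (P False * d01 - P True * d10) \<le> 0"
    using optimal_channel_distortion(1)[OF assms(1)] assms(2) D by (simp add: algebra_simps)
  then show ?thesis
    using optimal_channel_distortion(3)[OF assms(1)] assms(2) by (simp add: mult_le_0_iff)
qed

end

section \<open>The perturbed sources\<close>

lemma abs_ratio_approx:
  fixes x y r s d :: real
  assumes x: "x > 0" and y: "y > 0" and r: "\<bar>r - x\<bar> \<le> d" and s: "\<bar>s - y\<bar> \<le> d" and d: "4 * d \<le> x + y"
  shows "r + s > 0" "\<bar>r / (r + s) - x / (x + y)\<bar> \<le> 2 * d / (x + y)"
proof -
  have rs: "r + s \<ge> (x + y) / 2" using r s d by (auto simp: abs_le_iff)
  moreover have "(x + y) / 2 > 0" using x y by simp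
  ultimately show pos: "r + s > 0" by linarith
  have "\<bar>(r - x) * y\<bar> \<le> d * y" "\<bar>x * (s - y)\<bar> \<le> x * d"
    using r s x y by (simp_all add: abs_mult mult_right_mono mult_left_mono)
  then have "\<bar>(r - x) * y - x * (s - y)\<bar> \<le> d * y + x * d"
    using abs_triangle_ineq4[of "(r - x) * y" "x * (s - y)"] by linarith
  then have num: "\<bar>(r - x) * y - x * (s - y)\<bar> \<le> d * (x + y)" by (simp add: algebra_simps)
  have "r / (r + s) - x / (x + y) = ((r - x) * y - x * (s - y)) / ((r + s) * (x + y))"
    using pos x y by (simp add: field_simps)
  then have "\<bar>r / (r + s) - x / (x + y)\<bar> = \<bar>(r - x) * y - x * (s - y)\<bar> / ((r + s) * (x + y))"
    using pos x y by (simp add: abs_divide)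
  also have "\<dots> \<le> d * (x + y) / ((r + s) * (x + y))"
    using num pos x y by (intro divide_right_mono) auto
  also have "\<dots> = d / (r + s)" using x y by simp
  also have "\<dots> \<le> d / ((x + y) / 2)"
    using rs x y pos r by (intro divide_left_mono) auto
  also have "\<dots> = 2 * d / (x + y)" by simp
  finally show "\<bar>r / (r + s) - x / (x + y)\<bar> \<le> 2 * d / (x + y)" .
qed

lemma abs_mult_approx:
  fixes u U v V d :: real
  assumes "\<bar>u - U\<bar> \<le> d" "\<bar>v - V\<bar> \<le> d" "\<bar>U\<bar> \<le> 1" "d \<le> 1"
  shows "\<bar>u * v - U * V\<bar> \<le> d * (\<bar>V\<bar> + 2)"
proof -
  have "\<bar>(u - U) * v\<bar> \<le> d * (\<bar>V\<bar> + 1)"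
    unfolding abs_mult using assms(1,2,4) by (intro mult_mono) auto
  moreover have "\<bar>U * (v - V)\<bar> \<le> 1 * d" unfolding abs_mult using assms(2,3) by (intro mult_mono) auto
  moreover have "u * v - U * V = (u - U) * v + U * (v - V)" by (simp add: algebra_simps)
  ultimately show ?thesis using abs_triangle_ineq[of "(u - U) * v" "U * (v - V)"] by (simp add: algebra_simps)
qed

lemma exists_inverse_power2_less: "(r::real) > 0 \<Longrightarrow> \<exists>c::nat. 1 / 2 ^ c < r"
  using real_arch_pow_inv[of r "1 / 2"] by (simp add: power_one_over)

locale perturbed_source =
  fixes d01 d10 :: real and q01 q10 :: "nat \<Rightarrow> nat"
  assumes d01: "d01 > 0" and d10: "d10 > 0"
    and computable_q01: "computable_fn 1 (\<lambda>e. q01 (e 0))" and computable_q10: "computable_fn 1 (\<lambda>e. q10 (e 0))"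
    and q01: "\<And>m. \<bar>rat_decode (q01 m) - d01\<bar> \<le> 1 / 2 ^ m"
    and q10: "\<And>m. \<bar>rat_decode (q10 m) - d10\<bar> \<le> 1 / 2 ^ m"
begin

definition sum_shift :: nat where "sum_shift = (SOME c. 1 / 2 ^ c < (d01 + d10) / 4)"
definition signal_shift :: nat where "signal_shift = (SOME c. 1 / 2 ^ c < min d01 d10 / (d01 + d10))"
definition product_shift :: nat where "product_shift = (SOME c. 1 / 2 ^ c < 1 / (d01 + d10 + 2))"

lemma sum_shift: "1 / 2 ^ sum_shift < (d01 + d10) / 4"
  unfolding sum_shift_def by (rule someI_ex, rule exists_inverse_power2_less) (use d01 d10 in simp)

lemma signal_shift: "1 / 2 ^ signal_shift < min d01 d10 / (d01 + d10)"
  unfolding signal_shift_def by (rule someI_ex, rule exists_inverse_power2_less) (use d01 d10 in simp)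

lemma product_shift: "1 / 2 ^ product_shift < 1 / (d01 + d10 + 2)"
  unfolding product_shift_def by (rule someI_ex, rule exists_inverse_power2_less) (use d01 d10 in simp)

abbreviation signal :: "nat \<Rightarrow> real" where "signal \<equiv> diagonal_signal signal_shift"

definition source :: "nat \<Rightarrow> bool \<Rightarrow> real" where
  "source n b = (if b then d01 / (d01 + d10) + signal n else d10 / (d01 + d10) - signal n)"

definition level :: "nat \<Rightarrow> real" where
  "level n = min (source n True * d10) (source n False * d01)"

lemma source_pos: "source n b > 0" and source_le_1: "source n b \<le> 1"
  and source_sum: "source n True + source n False = 1"
proof -
  have "\<bar>signal n\<bar> < min d01 d10 / (d01 + d10)"
    using abs_diagonal_signal_le signal_shift by (rule order_le_less_trans)
  moreover have "min d01 d10 / (d01 + d10) \<le> d01 / (d01 + d10)" "min d01 d10 / (d01 + d10) \<le> d10 / (d01 + d10)"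
    using d01 d10 by (auto intro: divide_right_mono)
  moreover have "d01 / (d01 + d10) + d10 / (d01 + d10) = 1"
    using d01 d10 by (simp add: add_divide_distrib[symmetric])
  ultimately show "source n b > 0" "source n b \<le> 1" "source n True + source n False = 1"
    unfolding source_def by (auto simp: abs_less_iff)
qed

lemma is_dist_source: "is_dist (source n)"
  unfolding is_dist_def UNIV_bool using source_pos[of n] source_sum[of n] by (simp add: add.commute less_imp_le)

lemma source_gap: "source n True * d10 - source n False * d01 = signal n * (d01 + d10)"
proof -
  have "d01 / (d01 + d10) * d10 - d10 / (d01 + d10) * d01 = 0" by simp
  then show ?thesis unfolding source_def by (simp add: algebra_simps)
qed

lemma zero_rate_level: "zero_rate_level d01 d10 (source n) (level n)"
  using d01 d10 is_dist_source source_pos unfolding zero_rate_level_def level_def by blast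

definition mass_ratio_enc :: "bool \<Rightarrow> nat \<Rightarrow> nat" where
  "mass_ratio_enc b k = rat_div_enc (if b then q01 (k + sum_shift) else q10 (k + sum_shift))
     (rat_add_enc (q01 (k + sum_shift)) (q10 (k + sum_shift)))"

definition source_enc :: "bool \<Rightarrow> nat \<Rightarrow> nat \<Rightarrow> nat" where
  "source_enc b n k = rat_add_enc (mass_ratio_enc b k)
     (if b then diagonal_signal_enc signal_shift n k else rat_neg_enc (diagonal_signal_enc signal_shift n k))"

definition level_enc :: "nat \<Rightarrow> nat \<Rightarrow> nat" where
  "level_enc n k = rat_min_enc
     (rat_mult_enc (source_enc True n (k + product_shift)) (q10 (k + product_shift)))
     (rat_mult_enc (source_enc False n (k + product_shift)) (q01 (k + product_shift)))"

lemma computable_fn_source_enc: "computable_fn 2 (\<lambda>e. source_enc b (e 0) (e 1))"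
  unfolding source_enc_def mass_ratio_enc_def
  by (intro computable_fn_rat_intros computable_fn_diagonal_signal_enc
      computable_fn_compose1[OF computable_q01] computable_fn_compose1[OF computable_q10]) simp_all

lemma computable_fn_level_enc: "computable_fn 2 (\<lambda>e. level_enc (e 0) (e 1))"
  unfolding level_enc_def
  by (intro computable_fn_rat_intros computable_fn_compose2[OF computable_fn_source_enc]
      computable_fn_compose1[OF computable_q01] computable_fn_compose1[OF computable_q10]) simp_all

lemma mass_ratio_enc_approx:
  "\<bar>rat_decode (mass_ratio_enc b k) - (if b then d01 else d10) / (d01 + d10)\<bar> \<le> 1 / 2 ^ (k + 1)"
proof -
  let ?d = "1 / 2 ^ (k + sum_shift) :: real"
  let ?r = "rat_decode (q01 (k + sum_shift))" and ?s = "rat_decode (q10 (k + sum_shift))"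
  have "?d \<le> 1 / 2 ^ sum_shift" by (intro divide_left_mono power_increasing) auto
  then have d: "4 * ?d \<le> d01 + d10" using sum_shift by simp
  have bound: "2 * ?d / (d01 + d10) \<le> 1 / 2 ^ (k + 1)"
  proof -
    have "2 * ?d / (d01 + d10) = (2 / 2 ^ k) * (1 / 2 ^ sum_shift / (d01 + d10))"
      by (simp add: power_add field_simps)
    also have "\<dots> \<le> (2 / 2 ^ k) * (1 / 4)"
      using sum_shift d01 d10 by (intro mult_left_mono) (simp_all add: field_simps)
    finally show ?thesis by simp
  qed
  have d': "4 * ?d \<le> d10 + d01" using d by simp
  note ratio = abs_ratio_approx[OF d01 d10 q01 q10 d] abs_ratio_approx(2)[OF d10 d01 q10 q01 d']
  have "0 < rat_decode (rat_add_enc (q01 (k + sum_shift)) (q10 (k + sum_shift)))"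
    using ratio(1) by (simp add: rat_decode_add_enc)
  then have "rat_decode (mass_ratio_enc b k) = (if b then ?r else ?s) / (?r + ?s)"
    unfolding mass_ratio_enc_def by (simp add: rat_decode_div_enc rat_decode_add_enc)
  then show ?thesis using ratio(2) ratio(3) bound by (auto simp: add.commute)
qed

lemma source_enc_approx: "\<bar>rat_decode (source_enc b n k) - source n b\<bar> \<le> 1 / 2 ^ k"
  using mass_ratio_enc_approx[of b k] diagonal_signal_enc_approx[of signal_shift n k]
  unfolding source_enc_def source_def by (cases b) (simp_all add: rat_decode_add_enc rat_decode_neg_enc)

lemma level_enc_approx: "\<bar>rat_decode (level_enc n k) - level n\<bar> \<le> 1 / 2 ^ k"
proof -
  have product: "\<bar>rat_decode (source_enc b n (k + product_shift)) * rat_decode (q (k + product_shift))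
      - source n b * d\<bar> \<le> 1 / 2 ^ k"
    if "\<And>m. \<bar>rat_decode (q m) - d\<bar> \<le> 1 / 2 ^ m" "0 < d" "d \<le> d01 + d10" for b q d
  proof -
    have "\<bar>rat_decode (source_enc b n (k + product_shift)) * rat_decode (q (k + product_shift)) - source n b * d\<bar>
        \<le> 1 / 2 ^ (k + product_shift) * (\<bar>d\<bar> + 2)"
      using source_pos[of n b] source_le_1[of n b]
      by (intro abs_mult_approx source_enc_approx that(1)) auto
    also have "\<dots> = (1 / 2 ^ k) * ((d + 2) / 2 ^ product_shift)" using that(2) by (simp add: power_add)
    also have "\<dots> \<le> 1 / 2 ^ k"
    proof -
      have "(d + 2) / 2 ^ product_shift \<le> (d01 + d10 + 2) / 2 ^ product_shift"
        using that(3) by (intro divide_right_mono) auto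
      also have "\<dots> < 1" using product_shift d01 d10 by (simp add: field_simps)
      finally show ?thesis by (intro mult_left_le) simp_all
    qed
    finally show ?thesis .
  qed
  show ?thesis
    using product[OF q10 d10, of True] product[OF q01 d01, of False] d01 d10
    unfolding level_enc_def level_def rat_decode_min_enc rat_decode_mult_enc by (auto simp: min_def abs_le_iff)
qed

lemma computable_real_seq_source: "computable_real_seq (\<lambda>n. source n b)"
  by (rule computable_real_seqI[OF computable_fn_source_enc source_enc_approx])

lemma computable_real_seq_level: "computable_real_seq level"
  by (rule computable_real_seqI[OF computable_fn_level_enc level_enc_approx])

lemma computable_dist_source: "computable_dist (source n)"
  unfolding computable_dist_def using is_dist_source computable_real_seq_nth[OF computable_real_seq_source]
  by blast

lemma optimal_channel_reveals_self_value:
  assumes "W \<in> P_opt (bin_dist d01 d10) (level n) (source n)" "self_halts n"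
  shows "W False False = (if self_value n = 0 then 0 else 1)"
proof (cases "self_value n = 0")
  case True
  then have "source n False * d01 < source n True * d10"
    using source_gap[of n] diagonal_signal_pos[OF assms(2)] d01 d10 by (smt (verit) mult_pos_pos)
  then show ?thesis
    using True zero_rate_level.optimal_channel_False_False_eq_0[OF zero_rate_level assms(1)] by simp
next
  case False
  then have "source n True * d10 < source n False * d01"
    using source_gap[of n] diagonal_signal_neg[OF assms(2)] d01 d10 by (smt (verit) mult_neg_pos)
  then show ?thesis
    using False zero_rate_level.optimal_channel_False_False_eq_1[OF zero_rate_level assms(1)] by simp
qed

lemma optimal_selector_not_computable:
  assumes "optimal_selector (bin_dist d01 d10) F"
  shows "\<not> computable_channel_seq (\<lambda>n. F (source n) (level n))"
proof
  assume "computable_channel_seq (\<lambda>n. F (source n) (level n))"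
  then have "computable_real_seq (\<lambda>n. F (source n) (level n) False False)"
    unfolding computable_channel_seq_def by blast
  moreover have "F (source n) (level n) \<in> P_opt (bin_dist d01 d10) (level n) (source n)" for n
    using assms computable_dist_source computable_real_seq_nth[OF computable_real_seq_level]
      zero_rate_level.P_opt_nonempty[OF zero_rate_level]
    unfolding optimal_selector_def by blast
  ultimately show False
    using computable_real_seq_misses_self_value optimal_channel_reveals_self_value by blast
qed

end

theorem mainTheorem7:
  fixes d01 d10 :: real
  assumes "computable_real d01" and "computable_real d10"
    and "d01 > 0" and "d10 > 0"
  shows "\<exists>(PX :: nat \<Rightarrow> bool \<Rightarrow> real) (Dn :: nat \<Rightarrow> real).
           (\<forall>n. computable_dist (PX n)) \<and> computable_dist_seq PX \<and> computable_real_seq Dn \<and>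
           (\<forall>n. P_opt (bin_dist d01 d10) (Dn n) (PX n) \<noteq> {}) \<and>
           (\<forall>F. optimal_selector (bin_dist d01 d10) F \<longrightarrow>
                \<not> computable_channel_seq (\<lambda>n. F (PX n) (Dn n)) \<and>
                \<not> BM_computable (bin_dist d01 d10) F)"
proof -
  obtain q01 q10 where "perturbed_source d01 d10 q01 q10"
    using computable_real_approx[OF assms(1)] computable_real_approx[OF assms(2)] assms(3,4)
    unfolding perturbed_source_def by metis
  then interpret perturbed_source d01 d10 q01 q10 .
  have computable_seq: "computable_dist_seq source"
    unfolding computable_dist_seq_def using computable_real_seq_source by blast
  have nonempty: "P_opt (bin_dist d01 d10) (level n) (source n) \<noteq> {}" for n
    using zero_rate_level.P_opt_nonempty[OF zero_rate_level] .
  have "\<not> BM_computable (bin_dist d01 d10) F" if "optimal_selector (bin_dist d01 d10) F" for F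
    using optimal_selector_not_computable[OF that] is_dist_source nonempty computable_seq computable_real_seq_level
    unfolding BM_computable_def by blast
  then show ?thesis
    using computable_dist_source computable_seq computable_real_seq_level nonempty optimal_selector_not_computable
    by blast
qed

end
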